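(* Let $n\ge5$, $g=[\frac12(n-1)]$, and let $H=y^2+x^2+a_1x^3+\dots+a_{n-2}x^n$ with $a_k\in\mathbb{R}$, $a_{n-2}\neq0$. Let $\delta(t)$, $t\in(0,T_H)$, be the continuous family of ovals in $\{H=t\}$ surrounding the center at the origin, oriented clockwise (along the Hamiltonian flow $\dot x=\partial H/\partial y$, $\dot y=-\partial H/\partial x$), and for integers $k\ge0$ set $I_k(t)=\int_{\delta(t)}x^k\,dx/y$. Then, for small positive $t$: (i) $I_{2k}(t)=t^k[c_k+O(t)]$, where $c_k=2\pi\frac{(2k-1)!!}{(2k)!!}$; (ii) $I_{2k+1}(t)=-\frac12\sum_{j=1}^g a_{2j-1}(2k+2j+1)\,t^{k+j}[c_{k+j}+O(t)]$. In particular, the coefficients in the expansion (ii) belong to the ideal generated by the odd-numbered parameters $a_1,a_3,\dots,a_{2g-1}$.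
   Context: $[\cdot]$ denotes the integer part; $(-1)!!=1$, $0!!=1$. *)

theory Defs
  imports "HOL-Analysis.Analysis" "HOL-Library.Landau_Symbols"
begin

(* Double factorial on naturals: 0!! = 1, 1!! = 1, (m+2)!! = (m+2) * m!!.
   The convention (-1)!! = 1 is realised in cc below via nat subtraction (2*0-1 = 0). *)
fun dfact :: "nat \<Rightarrow> nat" where
  "dfact 0 = 1"
| "dfact (Suc 0) = 1"
| "dfact (Suc (Suc m)) = Suc (Suc m) * dfact m"

definition cc :: "nat \<Rightarrow> real" where
  "cc k = 2 * pi * real (dfact (2 * k - 1)) / real (dfact (2 * k))"

definition ham_field :: "(real \<times> real \<Rightarrow> real) \<Rightarrow> real \<times> real \<Rightarrow> real \<times> real" where
  "ham_field H p = (deriv (\<lambda>y. H (fst p, y)) (snd p), - deriv (\<lambda>x. H (x, snd p)) (fst p))"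

definition central_oval :: "(real \<times> real \<Rightarrow> real) \<Rightarrow> real \<Rightarrow> (real \<times> real) set" where
  "central_oval H t = frontier (connected_component_set {p. H p < t} (0, 0))"

(* gamma on [0,P] traverses the oval exactly once along the Hamiltonian flow
   (hence clockwise) *)
definition oval_param ::
  "(real \<times> real \<Rightarrow> real) \<Rightarrow> real \<Rightarrow> (real \<Rightarrow> real \<times> real) \<Rightarrow> real \<Rightarrow> bool" where
  "oval_param H t \<gamma> P \<longleftrightarrow>
     P > 0 \<and>
     (\<forall>s. (\<gamma> has_vector_derivative ham_field H (\<gamma> s)) (at s)) \<and>
     \<gamma> P = \<gamma> 0 \<and>
     inj_on \<gamma> {0..<P} \<and>
     \<gamma> ` {0..<P} = central_oval H t"

definition oval_integral :: "(real \<times> real \<Rightarrow> real) \<Rightarrow> nat \<Rightarrow> real \<Rightarrow> real" where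
  "oval_integral H k t =
     (THE v. \<exists>\<gamma> P. oval_param H t \<gamma> P \<and>
        v = integral {0..P} (\<lambda>s. (fst (\<gamma> s)) ^ k / snd (\<gamma> s) * fst (vector_derivative \<gamma> (at s))))"

end

theory Submission
  imports Defs
begin

(*
  Write the potential as F(x) = x^2 (1 + A(x)) and pass to the Morse coordinate
  X = x sqrt (1 + A(x)): near the origin F = X^2, so the central oval of {H = t} is the
  circle X^2 + y^2 = t. Along the Hamiltonian flow dx/ds = 2y, hence I_k(t) is twice the
  time integral of x^k over one period, and in the polar angle of that circle

    I_k(t) = integral over [0, 2 pi] of psi(r cos u)^k psi'(r cos u) du,   r = sqrt t,

  where psi is the inverse of the Morse coordinate. This gives |I_m(t)| <= C t^(m/2),
  I_0(t) = 2 pi + O(t), and I_(2k+1) = 0 when all odd coefficients vanish. Integrating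
  d(x^j y) over the oval yields the recurrence

    (j + 1) I_(j+1) = j t I_(j-1) - sum_i (j + (i + 2)/2) a_i I_(j+i+1),

  from which both expansions follow by induction; the leading terms match because
  (2k + 2) c_(k+1) = (2k + 1) c_k.
*)

lemma has_vector_derivative_fst:
  "(f has_vector_derivative v) F \<Longrightarrow> ((\<lambda>s. fst (f s)) has_real_derivative fst v) F"
  unfolding has_vector_derivative_def has_field_derivative_def
  by (drule has_derivative_fst) (simp, subst (asm) mult.commute, simp)

lemma has_vector_derivative_snd:
  "(f has_vector_derivative v) F \<Longrightarrow> ((\<lambda>s. snd (f s)) has_real_derivative snd v) F"
  unfolding has_vector_derivative_def has_field_derivative_def
  by (drule has_derivative_snd) (simp, subst (asm) mult.commute, simp)

lemma continuous_has_antiderivative: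
  fixes f :: "real \<Rightarrow> real"
  assumes "\<And>x. isCont f x"
  obtains K where "\<And>x. (K has_real_derivative f x) (at x)"
proof
  have cont: "continuous_on S f" for S
    using assms by (simp add: continuous_at_imp_continuous_on)
  have intg: "f integrable_on {a..b}" for a b
    by (rule integrable_continuous_real[OF cont])
  \<comment> \<open>\<open>integral {0..x} f\<close> vanishes for \<open>x < 0\<close>, so integrate from a point left of both 0 and \<open>x\<close>\<close>
  define K where "K x = integral {-(\<bar>x\<bar> + 1)..x} f - integral {-(\<bar>x\<bar> + 1)..0} f" for x
  fix x0 :: real
  define c where "c = -(\<bar>x0\<bar> + 2)"
  have K_near: "K y = integral {c..y} f - integral {c..0} f" if "y \<in> {x0 - 1<..<x0 + 1}" for y
  proof -
    have c: "c \<le> -(\<bar>y\<bar> + 1)"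
      using that unfolding c_def by auto
    have "integral {c..-(\<bar>y\<bar> + 1)} f + integral {-(\<bar>y\<bar> + 1)..y} f = integral {c..y} f"
      "integral {c..-(\<bar>y\<bar> + 1)} f + integral {-(\<bar>y\<bar> + 1)..0} f = integral {c..0} f"
      using c by (intro Henstock_Kurzweil_Integration.integral_combine intg; simp)+
    then show ?thesis
      unfolding K_def by linarith
  qed
  have "((\<lambda>y. integral {c..y} f) has_real_derivative f x0) (at x0 within {c<..<x0 + 1})"
    by (rule DERIV_subset[OF integral_has_real_derivative[of c "x0 + 1" f x0]])
       (auto simp: c_def cont)
  then have "((\<lambda>y. integral {c..y} f - integral {c..0} f) has_real_derivative f x0) (at x0)"
    by (subst (asm) at_within_open) (auto simp: c_def intro!: derivative_eq_intros)
  then show "(K has_real_derivative f x0) (at x0)"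
    by (rule has_field_derivative_transform_within_open[where S = "{x0 - 1<..<x0 + 1}"])
       (use K_near in auto)
qed

lemma antiderivative_periodic_increment:
  fixes f K :: "real \<Rightarrow> real"
  assumes K: "\<And>x. (K has_real_derivative f x) (at x)"
    and periodic: "\<And>x. f (x - p) = f x" and "0 \<le> p"
  shows "K u - K (u - p) = integral {0..p} f"
proof -
  have "\<exists>c. \<forall>x\<in>UNIV. K x - K (x - p) = c"
  proof (rule has_field_derivative_zero_constant)
    fix x
    have "((\<lambda>x. K x - K (x - p)) has_real_derivative f x - f (x - p) * (1 - 0)) (at x)"
      by (intro derivative_intros K DERIV_chain2[OF K])
    then show "((\<lambda>x. K x - K (x - p)) has_real_derivative 0) (at x within UNIV)"
      using periodic by simp
  qed auto
  then obtain c where c: "\<And>x. K x - K (x - p) = c"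
    by blast
  have "(f has_integral K p - K 0) {0..p}"
    using \<open>0 \<le> p\<close> K
    by (intro fundamental_theorem_of_calculus)
       (auto simp: has_real_derivative_iff_has_vector_derivative[symmetric] intro: has_field_derivative_at_within)
  then show ?thesis
    using c[of u] c[of p] by (simp add: integral_unique)
qed

lemma derivative_bounded_below_strict_mono_surj:
  fixes G G' :: "real \<Rightarrow> real"
  assumes G: "\<And>v. (G has_real_derivative G' v) (at v)"
    and G'_ge: "\<And>v. c \<le> G' v" and "0 < c"
  shows "strict_mono G" "surj G"
proof -
  show "strict_mono G"
  proof (rule strict_monoI)
    fix v w :: real assume "v < w"
    then show "G v < G w"
    proof (rule DERIV_pos_imp_increasing)
      fix z
      show "\<exists>y. (G has_real_derivative y) (at z) \<and> 0 < y"
        using G[of z] G'_ge[of z] \<open>0 < c\<close> by force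
    qed
  qed
  have growth: "c * (w - v) \<le> G w - G v" if "v \<le> w" for v w
  proof (cases "v = w")
    case False
    with that have "v < w"
      by simp
    then obtain z where "G w - G v = (w - v) * G' z"
      using MVT2[of v w G G'] G by blast
    then show ?thesis
      using G'_ge[of z] that by (simp add: mult_right_mono mult.commute)
  qed simp
  have "\<exists>v. G v = s" for s
  proof -
    define b where "b = (\<bar>s\<bar> + \<bar>G 0\<bar>) / c"
    have b: "0 \<le> b" "c * b = \<bar>s\<bar> + \<bar>G 0\<bar>"
      using \<open>0 < c\<close> by (auto simp: b_def)
    have "G (- b) \<le> s" "s \<le> G b"
      using growth[of "- b" 0] growth[of 0 b] b by auto
    moreover have "- b \<le> b"
      using b by simp
    ultimately show ?thesis
      using IVT[of G "- b" s b] G DERIV_isCont by blast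
  qed
  then show "surj G"
    by (metis surjI)
qed

lemma inverse_of_derivative_bounded_below:
  fixes G G' :: "real \<Rightarrow> real"
  assumes G: "\<And>v. (G has_real_derivative G' v) (at v)"
    and G'_ge: "\<And>v. c \<le> G' v" and "0 < c"
  obtains u where "\<And>s. G (u s) = s" "\<And>v. u (G v) = v"
    "\<And>s. (u has_real_derivative inverse (G' (u s))) (at s)"
proof -
  note G_bij = derivative_bounded_below_strict_mono_surj[OF assms]
  define u where "u = inv G"
  have Gu: "G (u s) = s" for s
    unfolding u_def by (rule surj_f_inv_f[OF G_bij(2)])
  have uG: "u (G v) = v" for v
    unfolding u_def by (rule inv_f_f[OF strict_mono_imp_inj_on[OF G_bij(1)]])
  have G_cont: "isCont G v" for v
    using G DERIV_isCont by blast
  have "(u has_real_derivative inverse (G' (u s))) (at s)" for s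
  proof (rule DERIV_inverse_function[where f = G and a = "s - 1" and b = "s + 1"])
    have "isCont u (G (u s))"
      by (rule isCont_inverse_function[where d = 1 and f = G]) (simp_all add: uG G_cont)
    then show "isCont u s"
      by (simp add: Gu)
    show "G' (u s) \<noteq> 0"
      using G'_ge[of "u s"] \<open>0 < c\<close> by auto
  qed (simp_all add: G Gu)
  then show thesis
    using that Gu uG by blast
qed

lemma strict_mono_surj_image_atLeastLessThan:
  fixes u :: "real \<Rightarrow> real"
  assumes "strict_mono u" "surj u"
  shows "u ` {a..<b} = {u a..<u b}"
proof
  show "u ` {a..<b} \<subseteq> {u a..<u b}"
    using assms(1) by (auto simp: strict_mono_less strict_mono_less_eq)
  show "{u a..<u b} \<subseteq> u ` {a..<b}"
  proof
    fix v assume v: "v \<in> {u a..<u b}"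
    obtain s where "v = u s"
      using assms(2) by (metis surjD)
    then show "v \<in> u ` {a..<b}"
      using v assms(1) by (auto simp: strict_mono_less strict_mono_less_eq)
  qed
qed

lemma finite_sin_zeros:
  "finite {\<theta>::real. \<theta> \<in> {lo..hi} \<and> sin \<theta> = 0}"
proof (rule finite_subset)
  show "{\<theta>::real. \<theta> \<in> {lo..hi} \<and> sin \<theta> = 0} \<subseteq> (\<lambda>j::int. of_int j * pi) ` {\<lfloor>lo / pi\<rfloor>..\<lceil>hi / pi\<rceil>}"
  proof
    fix \<theta> assume \<theta>: "\<theta> \<in> {\<theta>::real. \<theta> \<in> {lo..hi} \<and> sin \<theta> = 0}"
    then obtain j :: int where j: "\<theta> = of_int j * pi"
      using sin_zero_iff_int2 by auto
    have "lo / pi \<le> of_int j" "of_int j \<le> hi / pi"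
      using \<theta> j by (auto simp: field_simps)
    then show "\<theta> \<in> (\<lambda>j::int. of_int j * pi) ` {\<lfloor>lo / pi\<rfloor>..\<lceil>hi / pi\<rceil>}"
      using j by (intro image_eqI[of _ _ j]) (auto simp: floor_le_iff le_ceiling_iff)
  qed
qed simp

lemma abs_sum_power_le:
  fixes c :: "nat \<Rightarrow> real" and e :: "nat \<Rightarrow> nat"
  assumes "\<bar>x\<bar> \<le> 1" and "\<And>i. i \<in> I \<Longrightarrow> m \<le> e i"
  shows "\<bar>\<Sum>i\<in>I. c i * x ^ e i\<bar> \<le> (\<Sum>i\<in>I. \<bar>c i\<bar>) * \<bar>x\<bar> ^ m"
proof -
  have "\<bar>\<Sum>i\<in>I. c i * x ^ e i\<bar> \<le> (\<Sum>i\<in>I. \<bar>c i\<bar> * \<bar>x\<bar> ^ e i)"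
    by (rule order.trans[OF sum_abs]) (simp add: abs_mult power_abs)
  also have "\<dots> \<le> (\<Sum>i\<in>I. \<bar>c i\<bar> * \<bar>x\<bar> ^ m)"
    using assms by (intro sum_mono mult_left_mono power_decreasing) auto
  finally show ?thesis
    by (simp add: sum_distrib_right)
qed

lemma sum_odd_even_split:
  fixes f :: "nat \<Rightarrow> 'a::comm_monoid_add"
  shows "(\<Sum>i=1..d. f i) = (\<Sum>j=1..(d + 1) div 2. f (2 * j - 1)) + (\<Sum>l=1..d div 2. f (2 * l))"
proof -
  have split: "{1..d} = (\<lambda>j. 2 * j - 1) ` {1..(d + 1) div 2} \<union> (\<lambda>l. 2 * l) ` {1..d div 2}"
  proof (intro equalityI subsetI)
    fix i assume i: "i \<in> {1..d}"
    show "i \<in> (\<lambda>j. 2 * j - 1) ` {1..(d + 1) div 2} \<union> (\<lambda>l. 2 * l) ` {1..d div 2}"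
    proof (cases "even i")
      case True
      then have "i = 2 * (i div 2)" "i div 2 \<in> {1..d div 2}"
        using i by (auto elim!: evenE)
      then show ?thesis
        by blast
    next
      case False
      then have "i = 2 * ((i + 1) div 2) - 1" "(i + 1) div 2 \<in> {1..(d + 1) div 2}"
        using i by (auto elim!: oddE)
      then show ?thesis
        by blast
    qed
  qed auto
  have disjoint: "(\<lambda>j. 2 * j - 1) ` {1..(d + 1) div 2} \<inter> (\<lambda>l. 2 * l) ` {1..d div 2} = {}"
    by auto presburger
  have "(\<Sum>i=1..d. f i) = (\<Sum>i\<in>(\<lambda>j. 2 * j - 1) ` {1..(d + 1) div 2}. f i) + (\<Sum>i\<in>(\<lambda>l. 2 * l) ` {1..d div 2}. f i)"
    unfolding split by (rule sum.union_disjoint[OF _ _ disjoint]) auto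
  also have "\<dots> = (\<Sum>j=1..(d + 1) div 2. f (2 * j - 1)) + (\<Sum>l=1..d div 2. f (2 * l))"
    by (subst (1 2) sum.reindex) (auto simp: inj_on_def)
  finally show ?thesis .
qed

lemma eventually_at_right_0_less:
  assumes "0 < b"
  shows "\<forall>\<^sub>F t in at_right (0::real). 0 < t \<and> t < b"
  unfolding eventually_at_right_field using assms by (intro exI[of _ b]) auto

lemma power_bigo_power_at_right_0:
  assumes "M \<le> N"
  shows "(\<lambda>t::real. t ^ N) \<in> O[at_right 0](\<lambda>t. t ^ M)"
proof -
  have bound: "norm (t ^ N) \<le> 1 * norm (t ^ M)" if "0 < t \<and> t < 1" for t :: real
  proof -
    have "t ^ N \<le> t ^ M"
      using that assms by (intro power_decreasing) auto
    then show ?thesis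
      using that by simp
  qed
  have "\<forall>\<^sub>F t in at_right 0. norm (t ^ N) \<le> 1 * norm ((t::real) ^ M)"
    using eventually_at_right_0_less[OF zero_less_one] by (rule eventually_mono) (rule bound)
  then show ?thesis
    by (rule bigoI)
qed

lemma bigo_power_weaken:
  assumes "f \<in> O[at_right 0](\<lambda>t. t ^ N)" "M \<le> N"
  shows "f \<in> O[at_right 0](\<lambda>t::real. t ^ M)"
  by (rule landau_o.big_trans[OF assms(1) power_bigo_power_at_right_0[OF assms(2)]])

lemma bigo_mult_power:
  "f \<in> O[F](\<lambda>t. t ^ N) \<Longrightarrow> (\<lambda>t. t * f t) \<in> O[F](\<lambda>t::real. t ^ Suc N)"
  unfolding power_Suc by (rule landau_o.big.mult_left)

lemma bigo_divide_power:
  assumes "f \<in> O[at_right 0](\<lambda>t. t ^ (N + p))"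
  shows "(\<lambda>t. f t / t ^ p) \<in> O[at_right 0](\<lambda>t::real. t ^ N)"
proof -
  have nz: "\<forall>\<^sub>F t in at_right 0. t ^ p \<noteq> (0::real)"
    using eventually_at_right_0_less[OF zero_less_one] by (rule eventually_mono) simp
  have eq: "\<forall>\<^sub>F t in at_right 0. t ^ (N + p) / t ^ p = (t ^ N :: real)"
    using eventually_at_right_0_less[OF zero_less_one] by (rule eventually_mono) (simp add: power_add)
  have "(\<lambda>t. f t / t ^ p) \<in> O[at_right 0](\<lambda>t. t ^ (N + p) / t ^ p)"
    by (rule landau_o.big.divide_right[OF nz assms])
  then show ?thesis
    unfolding landau_o.big.cong[OF eq] .
qed


section \<open>The Morse coordinate\<close>

locale oscillator =
  fixes a :: "nat \<Rightarrow> real" and d :: nat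
  assumes d_pos: "0 < d"
begin

definition A :: "real \<Rightarrow> real" where
  "A x = (\<Sum>i=1..d. a i * x ^ i)"

definition A' :: "real \<Rightarrow> real" where
  "A' x = (\<Sum>i=1..d. a i * real i * x ^ (i - 1))"

definition pot :: "real \<Rightarrow> real" where
  "pot x = x\<^sup>2 + (\<Sum>i=1..d. a i * x ^ (i + 2))"

definition pot' :: "real \<Rightarrow> real" where
  "pot' x = 2 * x + (\<Sum>i=1..d. a i * real (i + 2) * x ^ (i + 1))"

definition Ham :: "real \<times> real \<Rightarrow> real" where
  "Ham = (\<lambda>(x, y). y\<^sup>2 + pot x)"

definition genus :: nat where
  "genus = (d + 1) div 2"

definition coeff_sum :: real where
  "coeff_sum = (\<Sum>i=1..d. \<bar>a i\<bar>)"

definition coeff_sum' :: real where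
  "coeff_sum' = (\<Sum>i=1..d. \<bar>a i * real i\<bar>)"

definition \<delta> :: real where
  "\<delta> = min 1 (1 / (4 * (coeff_sum + coeff_sum' + 1)))"

lemma coeff_sum_nonneg: "0 \<le> coeff_sum" "0 \<le> coeff_sum'"
  unfolding coeff_sum_def coeff_sum'_def by (simp_all add: sum_nonneg)

lemma delta_pos: "0 < \<delta>"
  unfolding \<delta>_def using coeff_sum_nonneg by auto

lemma delta_le_1: "\<delta> \<le> 1"
  unfolding \<delta>_def by auto

lemma delta_coeff_sum: "\<delta> * (coeff_sum + coeff_sum' + 1) \<le> 1 / 4"
proof -
  have "\<delta> * (coeff_sum + coeff_sum' + 1) \<le> 1 / (4 * (coeff_sum + coeff_sum' + 1)) * (coeff_sum + coeff_sum' + 1)"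
    unfolding \<delta>_def using coeff_sum_nonneg by (intro mult_right_mono) auto
  also have "\<dots> = 1 / 4"
    using coeff_sum_nonneg by (simp add: field_simps)
  finally show ?thesis .
qed

lemma sum_from_2:
  "(\<Sum>i=1..d. f i) = f 1 + (\<Sum>i=2..d. f i)"
  using d_pos by (simp add: sum.atLeast_Suc_atMost numeral_2_eq_2)

lemma sum_from_2_le:
  fixes f :: "nat \<Rightarrow> real"
  shows "(\<Sum>i=2..d. \<bar>f i\<bar>) \<le> (\<Sum>i=1..d. \<bar>f i\<bar>)"
  unfolding sum_from_2[of "\<lambda>i. \<bar>f i\<bar>"] by simp

lemma abs_A_le:
  assumes "\<bar>x\<bar> \<le> 1"
  shows "\<bar>A x\<bar> \<le> coeff_sum * \<bar>x\<bar>"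
  using abs_sum_power_le[OF assms, where I = "{1..d}" and e = "\<lambda>i. i" and m = 1 and c = a]
  unfolding A_def coeff_sum_def by simp

lemma abs_A_sub_linear_le: "\<bar>x\<bar> \<le> 1 \<Longrightarrow> \<bar>A x - a 1 * x\<bar> \<le> coeff_sum * x\<^sup>2"
proof -
  assume x: "\<bar>x\<bar> \<le> 1"
  have "\<bar>A x - a 1 * x\<bar> = \<bar>\<Sum>i=2..d. a i * x ^ i\<bar>"
    unfolding A_def sum_from_2 by simp
  also have "\<dots> \<le> (\<Sum>i=2..d. \<bar>a i\<bar>) * \<bar>x\<bar> ^ 2"
    using x by (intro abs_sum_power_le) auto
  also have "\<dots> \<le> coeff_sum * x\<^sup>2"
    unfolding coeff_sum_def power2_abs by (intro mult_right_mono sum_from_2_le) auto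
  finally show ?thesis .
qed

lemma abs_A'_le:
  assumes "\<bar>x\<bar> \<le> 1"
  shows "\<bar>A' x\<bar> \<le> coeff_sum'"
  using abs_sum_power_le[OF assms, where I = "{1..d}" and e = "\<lambda>i. i - 1" and m = 0
      and c = "\<lambda>i. a i * real i"]
  unfolding A'_def coeff_sum'_def by simp

lemma abs_A'_sub_const_le: "\<bar>x\<bar> \<le> 1 \<Longrightarrow> \<bar>A' x - a 1\<bar> \<le> coeff_sum' * \<bar>x\<bar>"
proof -
  assume x: "\<bar>x\<bar> \<le> 1"
  have "\<bar>A' x - a 1\<bar> = \<bar>\<Sum>i=2..d. a i * real i * x ^ (i - 1)\<bar>"
    unfolding A'_def sum_from_2 by simp
  also have "\<dots> \<le> (\<Sum>i=2..d. \<bar>a i * real i\<bar>) * \<bar>x\<bar> ^ 1"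
    using x by (intro abs_sum_power_le) auto
  also have "\<dots> \<le> coeff_sum' * \<bar>x\<bar>"
    unfolding coeff_sum'_def power_one_right by (intro mult_right_mono sum_from_2_le) auto
  finally show ?thesis .
qed

lemma abs_A_small:
  assumes "\<bar>x\<bar> \<le> \<delta>"
  shows "\<bar>A x\<bar> \<le> 1 / 4" "\<bar>x * A' x\<bar> \<le> 1 / 4"
proof -
  have x1: "\<bar>x\<bar> \<le> 1"
    using assms delta_le_1 by auto
  have "\<bar>A x\<bar> \<le> (coeff_sum + coeff_sum' + 1) * \<delta>"
    using abs_A_le[OF x1] assms coeff_sum_nonneg
    by (smt (verit, best) mult_mono abs_ge_zero)
  then show "\<bar>A x\<bar> \<le> 1 / 4"
    using delta_coeff_sum by (simp add: mult.commute)
  have "\<bar>x * A' x\<bar> \<le> \<delta> * (coeff_sum + coeff_sum' + 1)"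
    unfolding abs_mult using assms abs_A'_le[OF x1] coeff_sum_nonneg
    by (intro mult_mono) auto
  then show "\<bar>x * A' x\<bar> \<le> 1 / 4"
    using delta_coeff_sum by linarith
qed

lemma has_real_derivative_A: "(A has_real_derivative A' x) (at x)"
proof -
  have "((\<lambda>x. a i * x ^ i) has_real_derivative a i * real i * x ^ (i - 1)) (at x)" for i
    using DERIV_cmult[OF DERIV_pow[of i x], of "a i"] by (simp add: mult.assoc)
  then show ?thesis
    unfolding A_def[abs_def] A'_def by (intro DERIV_sum) auto
qed

lemma has_real_derivative_pot: "(pot has_real_derivative pot' x) (at x)"
proof -
  have "((\<lambda>x. a i * x ^ (i + 2)) has_real_derivative a i * real (i + 2) * x ^ (i + 1)) (at x)" for i
    using DERIV_cmult[OF DERIV_pow[of "i + 2" x], of "a i"] by (simp add: mult.assoc)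
  then have "((\<lambda>x. \<Sum>i=1..d. a i * x ^ (i + 2)) has_real_derivative (\<Sum>i=1..d. a i * real (i + 2) * x ^ (i + 1))) (at x)"
    by (intro DERIV_sum) auto
  from DERIV_add[OF DERIV_pow[of 2 x] this] show ?thesis
    unfolding pot_def[abs_def] pot'_def by simp
qed

definition morse_factor :: "real \<Rightarrow> real" where
  "morse_factor x = sqrt (1 + A x)"

definition morse :: "real \<Rightarrow> real" where
  "morse x = x * morse_factor x"

definition morse' :: "real \<Rightarrow> real" where
  "morse' x = morse_factor x + x * A' x / (2 * morse_factor x)"

lemma morse_factor_bounds:
  assumes "\<bar>x\<bar> \<le> \<delta>"
  shows "3 / 4 \<le> morse_factor x" "morse_factor x \<le> 5 / 4" "0 < 1 + A x"
    "(morse_factor x)\<^sup>2 = 1 + A x"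
proof -
  have A: "\<bar>A x\<bar> \<le> 1 / 4"
    by (rule abs_A_small[OF assms])
  have "sqrt ((3 / 4)\<^sup>2) \<le> morse_factor x" "morse_factor x \<le> sqrt ((5 / 4)\<^sup>2)"
    unfolding morse_factor_def using A by (intro real_sqrt_le_mono; simp add: power2_eq_square)+
  then show "3 / 4 \<le> morse_factor x" "morse_factor x \<le> 5 / 4"
    by simp_all
  show "0 < 1 + A x"
    using A by simp
  then show "(morse_factor x)\<^sup>2 = 1 + A x"
    unfolding morse_factor_def by simp
qed

lemma has_real_derivative_morse:
  assumes "\<bar>x\<bar> \<le> \<delta>"
  shows "(morse has_real_derivative morse' x) (at x)"
proof -
  note F = morse_factor_bounds[OF assms]
  have "((\<lambda>x. sqrt (1 + A x)) has_real_derivative inverse (sqrt (1 + A x)) / 2 * (0 + A' x)) (at x)"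
    by (intro DERIV_real_sqrt has_real_derivative_A derivative_intros DERIV_chain2[of sqrt] F(3))
  then have "(morse_factor has_real_derivative inverse (morse_factor x) / 2 * A' x) (at x)"
    unfolding morse_factor_def[abs_def] by simp
  from DERIV_mult[OF DERIV_ident this] show ?thesis
    unfolding morse_def[abs_def] morse'_def by (simp add: field_simps)
qed

lemma isCont_morse: "\<bar>x\<bar> \<le> \<delta> \<Longrightarrow> isCont morse x"
  using has_real_derivative_morse DERIV_isCont by blast

lemma isCont_morse':
  assumes "\<bar>x\<bar> \<le> \<delta>"
  shows "isCont morse' x"
proof -
  have "isCont (\<lambda>x. sqrt (1 + A x)) x" "isCont A' x"
    unfolding A_def[abs_def] A'_def[abs_def] by (intro continuous_intros)+
  then show ?thesis
    unfolding morse'_def[abs_def] morse_factor_def[symmetric] using morse_factor_bounds[OF assms]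
    by (intro continuous_intros) auto
qed

lemma morse'_bounds:
  assumes "\<bar>x\<bar> \<le> \<delta>"
  shows "1 / 2 \<le> morse' x" "morse' x \<le> 2"
proof -
  note F = morse_factor_bounds[OF assms]
  have "\<bar>x * A' x / (2 * morse_factor x)\<bar> = \<bar>x * A' x\<bar> / (2 * morse_factor x)"
    using F by (simp add: abs_div)
  also have "\<dots> \<le> (1 / 4) / (2 * (3 / 4))"
    using F abs_A_small(2)[OF assms] by (intro frac_le) auto
  finally have "\<bar>x * A' x / (2 * morse_factor x)\<bar> \<le> 1 / 6"
    by simp
  then show "1 / 2 \<le> morse' x" "morse' x \<le> 2"
    unfolding morse'_def using F by linarith+
qed

lemma abs_morse_factor_sub_1:
  assumes "\<bar>x\<bar> \<le> \<delta>"
  shows "\<bar>morse_factor x - 1\<bar> \<le> \<bar>A x\<bar>"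
proof -
  note F = morse_factor_bounds[OF assms]
  have "A x = (morse_factor x - 1) * (morse_factor x + 1)"
    using F(4) by (simp add: algebra_simps power2_eq_square)
  then have "\<bar>A x\<bar> = \<bar>morse_factor x - 1\<bar> * (morse_factor x + 1)"
    using F by (simp add: abs_mult)
  moreover have "\<bar>morse_factor x - 1\<bar> * 1 \<le> \<bar>morse_factor x - 1\<bar> * (morse_factor x + 1)"
    using F by (intro mult_left_mono) auto
  ultimately show ?thesis
    by simp
qed

lemma morse'_expansion:
  obtains C where "0 \<le> C" "\<And>x. \<bar>x\<bar> \<le> \<delta> \<Longrightarrow> \<bar>morse' x - 1 - a 1 * x\<bar> \<le> C * x\<^sup>2"
proof
  let ?C = "coeff_sum\<^sup>2 / 2 + coeff_sum / 2 + coeff_sum' + \<bar>a 1\<bar> * coeff_sum"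
  show "0 \<le> ?C"
    using coeff_sum_nonneg by simp
  fix x assume x: "\<bar>x\<bar> \<le> \<delta>"
  note F = morse_factor_bounds[OF x]
  have x1: "\<bar>x\<bar> \<le> 1"
    using x delta_le_1 by simp
  have mf: "\<bar>morse_factor x - 1\<bar> \<le> coeff_sum * \<bar>x\<bar>"
    using abs_morse_factor_sub_1[OF x] abs_A_le[OF x1] by simp
  have split: "morse' x - 1 - a 1 * x = - (morse_factor x - 1)\<^sup>2 / 2 + (A x - a 1 * x) / 2
      + x * ((A' x - a 1) + a 1 * (1 - morse_factor x)) / (2 * morse_factor x)"
    unfolding morse'_def using F by (simp add: field_simps power2_eq_square)
  have T1: "\<bar>- (morse_factor x - 1)\<^sup>2 / 2\<bar> \<le> coeff_sum\<^sup>2 / 2 * x\<^sup>2"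
  proof -
    have "\<bar>morse_factor x - 1\<bar>\<^sup>2 \<le> (coeff_sum * \<bar>x\<bar>)\<^sup>2"
      using mf by (intro power_mono) auto
    then show ?thesis
      by (simp add: power_mult_distrib)
  qed
  have T2: "\<bar>(A x - a 1 * x) / 2\<bar> \<le> coeff_sum / 2 * x\<^sup>2"
    using abs_A_sub_linear_le[OF x1] by simp
  have T3: "\<bar>x * ((A' x - a 1) + a 1 * (1 - morse_factor x)) / (2 * morse_factor x)\<bar>
      \<le> (coeff_sum' + \<bar>a 1\<bar> * coeff_sum) * x\<^sup>2"
  proof -
    have "\<bar>a 1\<bar> * \<bar>1 - morse_factor x\<bar> \<le> \<bar>a 1\<bar> * (coeff_sum * \<bar>x\<bar>)"
      using mf by (intro mult_left_mono) (auto simp: abs_minus_commute)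
    moreover have "\<bar>(A' x - a 1) + a 1 * (1 - morse_factor x)\<bar> \<le> \<bar>A' x - a 1\<bar> + \<bar>a 1\<bar> * \<bar>1 - morse_factor x\<bar>"
      using abs_triangle_ineq[of "A' x - a 1" "a 1 * (1 - morse_factor x)"] by (simp add: abs_mult)
    ultimately have "\<bar>(A' x - a 1) + a 1 * (1 - morse_factor x)\<bar> \<le> (coeff_sum' + \<bar>a 1\<bar> * coeff_sum) * \<bar>x\<bar>"
      using abs_A'_sub_const_le[OF x1] by (simp add: algebra_simps)
    then have "\<bar>x * ((A' x - a 1) + a 1 * (1 - morse_factor x))\<bar> \<le> \<bar>x\<bar> * ((coeff_sum' + \<bar>a 1\<bar> * coeff_sum) * \<bar>x\<bar>)"
      unfolding abs_mult by (intro mult_left_mono) auto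
    also have "\<dots> = (coeff_sum' + \<bar>a 1\<bar> * coeff_sum) * x\<^sup>2"
      by (simp add: power2_eq_square)
    finally have N: "\<bar>x * ((A' x - a 1) + a 1 * (1 - morse_factor x))\<bar> \<le> (coeff_sum' + \<bar>a 1\<bar> * coeff_sum) * x\<^sup>2" .
    have "\<bar>x * ((A' x - a 1) + a 1 * (1 - morse_factor x)) / (2 * morse_factor x)\<bar>
        \<le> \<bar>x * ((A' x - a 1) + a 1 * (1 - morse_factor x))\<bar> / 1"
      unfolding abs_divide using F by (intro divide_left_mono) auto
    then show ?thesis
      using N by simp
  qed
  have "\<bar>morse' x - 1 - a 1 * x\<bar> \<le> \<bar>- (morse_factor x - 1)\<^sup>2 / 2\<bar> + \<bar>(A x - a 1 * x) / 2\<bar>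
      + \<bar>x * ((A' x - a 1) + a 1 * (1 - morse_factor x)) / (2 * morse_factor x)\<bar>"
    unfolding split by (rule order.trans[OF abs_triangle_ineq add_right_mono[OF abs_triangle_ineq]])
  also have "\<dots> \<le> ?C * x\<^sup>2"
    using T1 T2 T3 by (simp add: algebra_simps)
  finally show "\<bar>morse' x - 1 - a 1 * x\<bar> \<le> ?C * x\<^sup>2" .
qed

lemma morse_0 [simp]: "morse 0 = 0"
  unfolding morse_def by simp

lemma abs_morse_sub_le:
  assumes "\<bar>x\<bar> \<le> \<delta>"
  shows "\<bar>morse x - x\<bar> \<le> coeff_sum * x\<^sup>2"
proof -
  have "\<bar>morse x - x\<bar> = \<bar>x\<bar> * \<bar>morse_factor x - 1\<bar>"
    unfolding morse_def by (simp add: abs_mult[symmetric] algebra_simps)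
  also have "\<dots> \<le> \<bar>x\<bar> * (coeff_sum * \<bar>x\<bar>)"
    using abs_morse_factor_sub_1[OF assms] abs_A_le[of x] assms delta_le_1
    by (intro mult_left_mono) auto
  finally show ?thesis
    by (simp add: power2_eq_square algebra_simps)
qed

lemma pot_eq_morse_sq:
  assumes "\<bar>x\<bar> \<le> \<delta>"
  shows "pot x = (morse x)\<^sup>2"
proof -
  have "(morse x)\<^sup>2 = x\<^sup>2 * (1 + A x)"
    unfolding morse_def using morse_factor_bounds(4)[OF assms] by (simp add: power_mult_distrib)
  also have "\<dots> = pot x"
    unfolding pot_def A_def
    by (simp add: distrib_left sum_distrib_left power_add power2_eq_square mult_ac)
  finally show ?thesis
    by simp
qed

lemma pot'_eq:
  assumes "\<bar>x\<bar> < \<delta>"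
  shows "pot' x = 2 * morse x * morse' x"
proof -
  have "((\<lambda>x. (morse x)\<^sup>2) has_real_derivative 2 * morse x * morse' x) (at x)"
    using DERIV_power[OF has_real_derivative_morse, of x 2] assms by (simp add: mult_ac)
  then have "(pot has_real_derivative 2 * morse x * morse' x) (at x)"
    by (rule has_field_derivative_transform_within_open[where S = "{-\<delta><..<\<delta>}"])
       (use assms pot_eq_morse_sq in auto)
  then show ?thesis
    using has_real_derivative_pot DERIV_unique by blast
qed

lemma abs_morse_bounds:
  assumes "\<bar>x\<bar> \<le> \<delta>"
  shows "3 / 4 * \<bar>x\<bar> \<le> \<bar>morse x\<bar>" "\<bar>morse x\<bar> \<le> 5 / 4 * \<bar>x\<bar>"
proof -
  note F = morse_factor_bounds[OF assms]
  have "\<bar>x\<bar> * (3 / 4) \<le> \<bar>x\<bar> * morse_factor x" "\<bar>x\<bar> * morse_factor x \<le> \<bar>x\<bar> * (5 / 4)"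
    using F by (intro mult_left_mono; simp)+
  then show "3 / 4 * \<bar>x\<bar> \<le> \<bar>morse x\<bar>" "\<bar>morse x\<bar> \<le> 5 / 4 * \<bar>x\<bar>"
    using F unfolding morse_def abs_mult by auto
qed

lemma morse_less:
  assumes "- \<delta> \<le> x" "x < y" "y \<le> \<delta>"
  shows "morse x < morse y"
proof (rule DERIV_pos_imp_increasing[OF assms(2)])
  fix z assume "x \<le> z" "z \<le> y"
  then have z: "\<bar>z\<bar> \<le> \<delta>"
    using assms by auto
  show "\<exists>D. (morse has_real_derivative D) (at z) \<and> 0 < D"
    using has_real_derivative_morse[OF z] morse'_bounds[OF z] by force
qed

lemma morse_inj:
  assumes "\<bar>x\<bar> \<le> \<delta>" "\<bar>y\<bar> \<le> \<delta>" "morse x = morse y"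
  shows "x = y"
proof -
  have "\<not> x < y" "\<not> y < x"
    using morse_less[of x y] morse_less[of y x] assms by (auto simp: abs_le_iff)
  then show ?thesis
    by simp
qed

lemma abs_morse_scale_le:
  assumes "\<bar>x\<bar> \<le> \<delta>" "0 \<le> u" "u \<le> 1"
  shows "\<bar>morse (u * x)\<bar> \<le> \<bar>morse x\<bar>"
    and "u < 1 \<Longrightarrow> x \<noteq> 0 \<Longrightarrow> \<bar>morse (u * x)\<bar> < \<bar>morse x\<bar>"
proof -
  have ux: "\<bar>u * x\<bar> \<le> \<bar>x\<bar>"
    using assms by (simp add: abs_mult mult_left_le_one_le)
  have mono: "morse v \<le> morse w" if "- \<delta> \<le> v" "v \<le> w" "w \<le> \<delta>" for v w
    using morse_less[of v w] that by (cases "v = w") auto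
  show "\<bar>morse (u * x)\<bar> \<le> \<bar>morse x\<bar>"
  proof (cases "0 \<le> x")
    case True
    then have "0 \<le> u * x" "u * x \<le> x"
      using assms by (auto simp: mult_left_le_one_le)
    then show ?thesis
      using mono[of 0 "u * x"] mono[of "u * x" x] assms delta_pos by auto
  next
    case False
    then have "u * x \<le> 0" "x \<le> u * x"
      using assms by (auto simp: mult_le_0_iff mult_left_le_one_le)
    then show ?thesis
      using mono[of "u * x" 0] mono[of x "u * x"] assms delta_pos by auto
  qed
  assume "u < 1" "x \<noteq> 0"
  show "\<bar>morse (u * x)\<bar> < \<bar>morse x\<bar>"
  proof (cases "0 < x")
    case True
    then have "0 \<le> u * x" "u * x < x"
      using assms \<open>u < 1\<close> by auto
    then show ?thesis
      using mono[of 0 "u * x"] morse_less[of "u * x" x] assms delta_pos by auto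
  next
    case False
    then have "u * x \<le> 0" "x < u * x"
      using assms \<open>u < 1\<close> \<open>x \<noteq> 0\<close> by (auto simp: mult_le_0_iff)
    then show ?thesis
      using mono[of "u * x" 0] morse_less[of x "u * x"] assms delta_pos by auto
  qed
qed

definition morse_inv :: "real \<Rightarrow> real" where
  "morse_inv X = (THE x. \<bar>x\<bar> \<le> \<delta> \<and> morse x = X)"

definition morse_inv' :: "real \<Rightarrow> real" where
  "morse_inv' X = 1 / morse' (morse_inv X)"

lemma morse_inv_morse:
  assumes "\<bar>x\<bar> \<le> \<delta>"
  shows "morse_inv (morse x) = x"
  unfolding morse_inv_def using assms morse_inj by (intro the_equality) auto

lemma morse_inv_eq:
  assumes "\<bar>X\<bar> \<le> \<delta> / 2"
  obtains x where "\<bar>x\<bar> \<le> \<delta>" "morse x = X" "morse_inv X = x"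
proof -
  have "morse (- \<delta>) \<le> - \<delta> / 2" "\<delta> / 2 \<le> morse \<delta>"
    using abs_morse_bounds(1)[of "- \<delta>"] abs_morse_bounds(1)[of \<delta>] morse_less[of "- \<delta>" 0]
      morse_less[of 0 \<delta>] delta_pos by auto
  then have "morse (- \<delta>) \<le> X" "X \<le> morse \<delta>"
    using assms by (auto simp: abs_le_iff)
  moreover have "\<forall>x. - \<delta> \<le> x \<and> x \<le> \<delta> \<longrightarrow> isCont morse x"
    by (auto intro: isCont_morse)
  ultimately obtain x where x: "- \<delta> \<le> x" "x \<le> \<delta>" "morse x = X"
    using IVT[of morse "- \<delta>" X \<delta>] delta_pos by auto
  then have "\<bar>x\<bar> \<le> \<delta>"
    by (simp add: abs_le_iff)
  then show thesis
    using that[of x] morse_inv_morse[of x] x(3) by simp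
qed

lemma morse_morse_inv: "\<bar>X\<bar> \<le> \<delta> / 2 \<Longrightarrow> morse (morse_inv X) = X"
  by (metis morse_inv_eq)

lemma abs_morse_inv_le:
  assumes "\<bar>X\<bar> \<le> \<delta> / 2"
  shows "\<bar>morse_inv X\<bar> \<le> 4 / 3 * \<bar>X\<bar>" "\<bar>morse_inv X\<bar> < \<delta>"
proof -
  obtain x where x: "\<bar>x\<bar> \<le> \<delta>" "morse x = X" "morse_inv X = x"
    using morse_inv_eq[OF assms] .
  then show "\<bar>morse_inv X\<bar> \<le> 4 / 3 * \<bar>X\<bar>"
    using abs_morse_bounds(1)[of x] by auto
  then show "\<bar>morse_inv X\<bar> < \<delta>"
    using assms delta_pos by linarith
qed

lemma isCont_morse_inv:
  assumes "\<bar>X\<bar> < \<delta> / 2"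
  shows "isCont morse_inv X"
proof -
  define x where "x = morse_inv X"
  have x: "\<bar>x\<bar> < \<delta>" "morse x = X"
    unfolding x_def using abs_morse_inv_le[of X] morse_morse_inv[of X] assms by auto
  have "isCont morse_inv (morse x)"
    by (rule isCont_inverse_function[where d = "\<delta> - \<bar>x\<bar>"])
       (use x in \<open>auto intro!: morse_inv_morse isCont_morse\<close>)
  then show ?thesis
    using x by simp
qed

lemma has_real_derivative_morse_inv:
  assumes "\<bar>X\<bar> < \<delta> / 2"
  shows "(morse_inv has_real_derivative morse_inv' X) (at X)"
proof -
  have x: "\<bar>morse_inv X\<bar> \<le> \<delta>"
    using abs_morse_inv_le(2)[of X] assms by simp
  have "(morse_inv has_real_derivative inverse (morse' (morse_inv X))) (at X)"
  proof (rule DERIV_inverse_function[where f = morse and a = "- (\<delta> / 2)" and b = "\<delta> / 2"])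
    show "(morse has_real_derivative morse' (morse_inv X)) (at (morse_inv X))"
      by (rule has_real_derivative_morse[OF x])
    show "morse' (morse_inv X) \<noteq> 0"
      using morse'_bounds[OF x] by auto
  qed (use assms isCont_morse_inv morse_morse_inv in auto)
  then show ?thesis
    unfolding morse_inv'_def by (simp add: inverse_eq_divide)
qed

lemma morse_inv'_bounds:
  assumes "\<bar>X\<bar> \<le> \<delta> / 2"
  shows "1 / 2 \<le> morse_inv' X" "morse_inv' X \<le> 2"
  using morse'_bounds[of "morse_inv X"] abs_morse_inv_le(2)[OF assms]
  unfolding morse_inv'_def by (auto simp: field_simps)

lemma isCont_morse_inv':
  assumes "\<bar>X\<bar> < \<delta> / 2"
  shows "isCont morse_inv' X"
proof -
  have x: "\<bar>morse_inv X\<bar> \<le> \<delta>"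
    using abs_morse_inv_le(2)[of X] assms by simp
  have "isCont (\<lambda>X. morse' (morse_inv X)) X"
    by (rule isCont_o2[OF isCont_morse_inv[OF assms] isCont_morse'[OF x]])
  then show ?thesis
    unfolding morse_inv'_def[abs_def] using morse'_bounds[OF x] by (intro continuous_intros) auto
qed

lemma morse'_morse_inv_expansion:
  obtains E where "0 \<le> E" "\<And>X. \<bar>X\<bar> \<le> \<delta> / 2 \<Longrightarrow> \<bar>morse' (morse_inv X) - 1 - a 1 * X\<bar> \<le> E * X\<^sup>2"
proof -
  obtain C where C: "0 \<le> C" "\<And>x. \<bar>x\<bar> \<le> \<delta> \<Longrightarrow> \<bar>morse' x - 1 - a 1 * x\<bar> \<le> C * x\<^sup>2"
    using morse'_expansion by blast
  show thesis
  proof (rule that[of "4 * (C + \<bar>a 1\<bar> * coeff_sum)"])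
    show "0 \<le> 4 * (C + \<bar>a 1\<bar> * coeff_sum)"
      using C(1) coeff_sum_nonneg by simp
    fix X assume X: "\<bar>X\<bar> \<le> \<delta> / 2"
    define x where "x = morse_inv X"
    have x: "\<bar>x\<bar> \<le> \<delta>" "morse x = X" "x\<^sup>2 \<le> 4 * X\<^sup>2"
      using abs_morse_inv_le[OF X] morse_morse_inv[OF X] power_mono[of "\<bar>x\<bar>" "2 * \<bar>X\<bar>" 2]
      unfolding x_def by (auto simp: power_mult_distrib)
    have "\<bar>morse' x - 1 - a 1 * X\<bar> \<le> \<bar>morse' x - 1 - a 1 * x\<bar> + \<bar>a 1\<bar> * \<bar>morse x - x\<bar>"
      unfolding x(2)[symmetric]
      by (simp add: abs_mult[symmetric] algebra_simps abs_triangle_ineq[THEN order.trans])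
    also have "\<dots> \<le> (C + \<bar>a 1\<bar> * coeff_sum) * x\<^sup>2"
      using C(2)[OF x(1)] abs_morse_sub_le[OF x(1)] mult_left_mono[of _ _ "\<bar>a 1\<bar>"]
      by (fastforce simp: algebra_simps)
    also have "\<dots> \<le> (C + \<bar>a 1\<bar> * coeff_sum) * (4 * X\<^sup>2)"
      using x(3) C(1) coeff_sum_nonneg by (intro mult_left_mono) auto
    finally show "\<bar>morse' (morse_inv X) - 1 - a 1 * X\<bar> \<le> 4 * (C + \<bar>a 1\<bar> * coeff_sum) * X\<^sup>2"
      unfolding x_def by (simp add: algebra_simps)
  qed
qed

lemma morse_inv'_expansion:
  obtains C where "0 \<le> C" "\<And>X. \<bar>X\<bar> \<le> \<delta> / 2 \<Longrightarrow> \<bar>morse_inv' X - 1 + a 1 * X\<bar> \<le> C * X\<^sup>2"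
proof -
  obtain E where E: "0 \<le> E" "\<And>X. \<bar>X\<bar> \<le> \<delta> / 2 \<Longrightarrow> \<bar>morse' (morse_inv X) - 1 - a 1 * X\<bar> \<le> E * X\<^sup>2"
    using morse'_morse_inv_expansion by blast
  show thesis
  proof (rule that[of "2 * (a 1 ^ 2 + E * (1 + \<bar>a 1\<bar>))"])
    show "0 \<le> 2 * (a 1 ^ 2 + E * (1 + \<bar>a 1\<bar>))"
      using E(1) by simp
    fix X assume X: "\<bar>X\<bar> \<le> \<delta> / 2"
    define e where "e = morse' (morse_inv X) - 1 - a 1 * X"
    have m: "1 / 2 \<le> morse' (morse_inv X)"
      using morse'_bounds(1) abs_morse_inv_le(2)[OF X] by simp
    have "\<bar>a 1\<bar> * \<bar>X\<bar> \<le> \<bar>a 1\<bar>"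
      using X delta_le_1 by (simp add: mult_left_le)
    then have "\<bar>1 - a 1 * X\<bar> \<le> 1 + \<bar>a 1\<bar>"
      using abs_triangle_ineq4[of 1 "a 1 * X"] by (simp add: abs_mult)
    then have "\<bar>e * (1 - a 1 * X)\<bar> \<le> E * X\<^sup>2 * (1 + \<bar>a 1\<bar>)"
      unfolding abs_mult e_def using E X by (intro mult_mono) auto
    then have N: "\<bar>a 1 ^ 2 * X\<^sup>2 - e * (1 - a 1 * X)\<bar> \<le> a 1 ^ 2 * X\<^sup>2 + E * X\<^sup>2 * (1 + \<bar>a 1\<bar>)"
      by (smt (verit) abs_triangle_ineq4 zero_le_power2 mult_nonneg_nonneg abs_mult abs_power2)
    \<comment> \<open>\<open>1/(1 + a X + e) - 1 + a X = (a\<^sup>2 X\<^sup>2 - e (1 - a X)) / (1 + a X + e)\<close>\<close>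
    have "morse_inv' X - 1 + a 1 * X = (a 1 ^ 2 * X\<^sup>2 - e * (1 - a 1 * X)) / morse' (morse_inv X)"
      unfolding morse_inv'_def e_def using m by (simp add: field_simps power2_eq_square)
    then have "\<bar>morse_inv' X - 1 + a 1 * X\<bar> = \<bar>a 1 ^ 2 * X\<^sup>2 - e * (1 - a 1 * X)\<bar> / morse' (morse_inv X)"
      using m by (simp add: abs_divide)
    also have "\<dots> \<le> (a 1 ^ 2 * X\<^sup>2 + E * X\<^sup>2 * (1 + \<bar>a 1\<bar>)) / (1 / 2)"
      using N m E(1) by (intro frac_le) auto
    finally show "\<bar>morse_inv' X - 1 + a 1 * X\<bar> \<le> 2 * (a 1 ^ 2 + E * (1 + \<bar>a 1\<bar>)) * X\<^sup>2"
      by (simp add: algebra_simps)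
  qed
qed

section \<open>The central oval\<close>

definition tmax :: real where
  "tmax = (\<delta> / 4)\<^sup>2"

definition oval :: "real \<Rightarrow> (real \<times> real) set" where
  "oval t = {(x, y). \<bar>x\<bar> < \<delta> \<and> y\<^sup>2 + pot x = t}"

definition oval_disc :: "real \<Rightarrow> (real \<times> real) set" where
  "oval_disc t = {(x, y). \<bar>x\<bar> < \<delta> \<and> y\<^sup>2 + pot x < t}"

lemma tmax_pos: "0 < tmax"
  unfolding tmax_def using delta_pos by simp

lemma sqrt_less_delta: "t < tmax \<Longrightarrow> sqrt t < \<delta> / 4"
  unfolding tmax_def using delta_pos real_sqrt_less_mono[of t "(\<delta> / 4)\<^sup>2"] by simp

lemma Ham_Pair [simp]: "Ham (x, y) = y\<^sup>2 + pot x"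
  unfolding Ham_def by simp

lemma continuous_on_Ham: "continuous_on S Ham"
  unfolding Ham_def pot_def by (auto intro!: continuous_intros simp: case_prod_beta)

lemma Ham_scale_le:
  assumes "\<bar>x\<bar> \<le> \<delta>" "0 \<le> u" "u \<le> 1"
  shows "Ham (u * x, u * y) \<le> Ham (x, y)"
    and "u < 1 \<Longrightarrow> (x, y) \<noteq> (0, 0) \<Longrightarrow> Ham (u * x, u * y) < Ham (x, y)"
proof -
  have "u * \<bar>x\<bar> \<le> 1 * \<bar>x\<bar>"
    using assms by (intro mult_right_mono) auto
  then have ux: "\<bar>u * x\<bar> \<le> \<delta>"
    using assms by (simp add: abs_mult)
  have pot: "pot (u * x) = \<bar>morse (u * x)\<bar>\<^sup>2" "pot x = \<bar>morse x\<bar>\<^sup>2"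
    using pot_eq_morse_sq ux assms by simp_all
  have y: "(u * y)\<^sup>2 \<le> y\<^sup>2"
    using assms by (simp add: power_mult_distrib mult_left_le_one_le power_le_one)
  show "Ham (u * x, u * y) \<le> Ham (x, y)"
    using y power_mono[OF abs_morse_scale_le(1)[OF assms] abs_ge_zero, of 2] by (simp add: pot)
  assume "u < 1" "(x, y) \<noteq> (0, 0)"
  show "Ham (u * x, u * y) < Ham (x, y)"
  proof (cases "x = 0")
    case True
    with \<open>(x, y) \<noteq> (0, 0)\<close> have "(u * y)\<^sup>2 < y\<^sup>2"
      using assms \<open>u < 1\<close> by (simp add: power_mult_distrib power_less_one_iff)
    with True show ?thesis
      by simp
  next
    case False
    then have "\<bar>morse (u * x)\<bar>\<^sup>2 < \<bar>morse x\<bar>\<^sup>2"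
      using abs_morse_scale_le(2)[OF assms \<open>u < 1\<close>] by (intro power_strict_mono) auto
    with y show ?thesis
      by (simp add: pot)
  qed
qed

lemma oval_disc_open: "open (oval_disc t)"
proof -
  have "oval_disc t = {p. \<bar>fst p\<bar> < \<delta>} \<inter> {p. Ham p < t}"
    unfolding oval_disc_def by auto
  moreover have "open {p::real \<times> real. \<bar>fst p\<bar> < \<delta>}" "open {p. Ham p < t}"
    by (auto intro!: open_Collect_less continuous_intros continuous_on_Ham)
  ultimately show ?thesis
    by auto
qed

lemma oval_disc_scale:
  assumes "(x, y) \<in> oval_disc t" "0 \<le> u" "u \<le> 1"
  shows "(u * x, u * y) \<in> oval_disc t"
  using assms Ham_scale_le(1)[of x u y] abs_mult[of u x] mult_left_le_one_le[of "\<bar>x\<bar>" u]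
  unfolding oval_disc_def by auto

lemma oval_disc_connected: "0 < t \<Longrightarrow> connected (oval_disc t)"
proof (intro starlike_imp_connected starlike_def[THEN iffD2] bexI ballI subsetI)
  assume "0 < t"
  then show "(0, 0) \<in> oval_disc t"
    unfolding oval_disc_def pot_def using delta_pos by simp
  fix p q assume "p \<in> oval_disc t" "q \<in> closed_segment (0, 0) p"
  then show "q \<in> oval_disc t"
    using oval_disc_scale[of "fst p" "snd p" t]
    by (auto simp: in_segment zero_prod_def[symmetric] scaleR_prod_def)
qed

lemma pot_gt_tmax:
  assumes "\<delta> / 2 \<le> \<bar>x\<bar>" "\<bar>x\<bar> \<le> \<delta>"
  shows "tmax < pot x"
proof -
  have "(3 / 4 * (\<delta> / 2))\<^sup>2 \<le> \<bar>morse x\<bar>\<^sup>2"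
    using abs_morse_bounds(1)[OF assms(2)] assms(1) delta_pos by (intro power_mono) auto
  moreover have "tmax < (3 / 4 * (\<delta> / 2))\<^sup>2"
    unfolding tmax_def using delta_pos by (simp add: power2_eq_square)
  ultimately show ?thesis
    using pot_eq_morse_sq[OF assms(2)] by simp
qed

lemma component_eq_oval_disc:
  assumes "0 < t" "t < tmax"
  shows "connected_component_set {p. Ham p < t} (0, 0) = oval_disc t"
proof
  have 0: "(0, 0) \<in> oval_disc t"
    unfolding oval_disc_def pot_def using assms delta_pos by simp
  show "oval_disc t \<subseteq> connected_component_set {p. Ham p < t} (0, 0)"
    by (rule connected_component_maximal[OF 0 oval_disc_connected[OF assms(1)]])
       (auto simp: oval_disc_def)
  define C where "C = connected_component_set {p. Ham p < t} (0, 0)"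
  \<comment> \<open>C cannot cross the band \<open>\<delta>/2 \<le> \<bar>x\<bar> \<le> \<delta>\<close>, where the energy exceeds t\<close>
  define U where "U = {p::real \<times> real. \<bar>fst p\<bar> < \<delta>}"
  define V where "V = {p::real \<times> real. \<delta> / 2 < \<bar>fst p\<bar>}"
  have "open U" "open V"
    unfolding U_def V_def by (auto intro!: open_Collect_less continuous_intros)
  moreover have "U \<inter> V \<inter> C = {}"
  proof (safe)
    fix x y assume "(x, y) \<in> U" "(x, y) \<in> V" "(x, y) \<in> C"
    then have "Ham (x, y) < t"
      using connected_component_subset[of "{p. Ham p < t}" "(0, 0)"] unfolding C_def by blast
    moreover have "tmax < pot x"
      using \<open>(x, y) \<in> U\<close> \<open>(x, y) \<in> V\<close> pot_gt_tmax[of x] unfolding U_def V_def by auto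
    ultimately show "(x, y) \<in> {}"
      using assms by (smt (verit) Ham_Pair zero_le_power2)
  qed
  moreover have "C \<subseteq> U \<union> V"
    unfolding U_def V_def using delta_pos by auto
  ultimately have "U \<inter> C = {} \<or> V \<inter> C = {}"
    by (intro connectedD[of C]) (auto simp: C_def connected_connected_component)
  moreover have "(0, 0) \<in> U \<inter> C"
    using 0 unfolding C_def U_def by (auto simp: oval_disc_def)
  ultimately have "C \<subseteq> U"
    using \<open>C \<subseteq> U \<union> V\<close> by blast
  moreover have "C \<subseteq> {p. Ham p < t}"
    unfolding C_def by (rule connected_component_subset)
  ultimately show "C \<subseteq> oval_disc t"
    unfolding U_def oval_disc_def by auto
qed

lemma central_oval_eq_oval:
  assumes "0 < t" "t < tmax"
  shows "central_oval Ham t = oval t"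
proof -
  have frontier: "central_oval Ham t = closure (oval_disc t) - oval_disc t"
    unfolding central_oval_def component_eq_oval_disc[OF assms] frontier_def
      interior_open[OF oval_disc_open] ..
  have "closure (oval_disc t) \<subseteq> {p. \<bar>fst p\<bar> \<le> \<delta>} \<inter> {p. Ham p \<le> t}"
    by (intro closure_minimal closed_Int closed_Collect_le continuous_intros continuous_on_Ham)
       (auto simp: oval_disc_def)
  then have "closure (oval_disc t) - oval_disc t \<subseteq> oval t"
    using pot_gt_tmax[of \<delta>] pot_gt_tmax[of "- \<delta>"] assms delta_pos
    unfolding oval_def oval_disc_def
    by (auto simp: subset_iff) (smt (verit) zero_le_power2)+
  moreover have "oval t \<subseteq> closure (oval_disc t)"
  proof
    fix p assume p: "p \<in> oval t"
    then have "p \<noteq> (0, 0)"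
      using assms unfolding oval_def pot_def by auto
    moreover have "open_segment (0, 0) p \<subseteq> oval_disc t"
    proof
      fix q assume "q \<in> open_segment (0, 0) p"
      then obtain u where u: "0 < u" "u < 1" "q = (u * fst p, u * snd p)"
        by (auto simp: in_segment scaleR_prod_def)
      have "\<bar>u * fst p\<bar> < \<delta>"
        using p u by (auto simp: oval_def abs_mult intro: le_less_trans[OF mult_left_le_one_le])
      then show "q \<in> oval_disc t"
        using p u Ham_scale_le(2)[of "fst p" u "snd p"] \<open>p \<noteq> (0, 0)\<close>
        unfolding oval_def oval_disc_def by (auto simp: prod_eq_iff)
    qed
    ultimately show "p \<in> closure (oval_disc t)"
      using closure_mono[of "open_segment (0, 0) p" "oval_disc t"] by auto
  qed
  ultimately show ?thesis
    using frontier unfolding oval_def oval_disc_def by auto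
qed

context
  assumes odd_coeffs_zero: "\<forall>j\<in>{1..genus}. a (2 * j - 1) = 0"
begin

lemma A_even: "A (- x) = A x"
  unfolding A_def sum_odd_even_split[of _ d] genus_def[symmetric]
  using odd_coeffs_zero by simp

lemma A'_odd: "A' (- x) = - A' x"
proof -
  have "(\<Sum>l=1..d div 2. a (2 * l) * real (2 * l) * (- x) ^ (2 * l - 1))
      = - (\<Sum>l=1..d div 2. a (2 * l) * real (2 * l) * x ^ (2 * l - 1))"
    unfolding sum_negf[symmetric] by (intro sum.cong) auto
  then show ?thesis
    unfolding A'_def sum_odd_even_split[of _ d] genus_def[symmetric]
    using odd_coeffs_zero by simp
qed

lemma morse_odd: "morse (- x) = - morse x"
  unfolding morse_def morse_factor_def A_even by simp

lemma morse'_even: "morse' (- x) = morse' x"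
  unfolding morse'_def morse_factor_def A_even A'_odd by simp

lemma morse_inv_odd:
  assumes "\<bar>X\<bar> \<le> \<delta> / 2"
  shows "morse_inv (- X) = - morse_inv X"
  using morse_inv_morse[of "- morse_inv X"] abs_morse_inv_le[OF assms] morse_morse_inv[OF assms] morse_odd by simp

lemma morse_inv'_even:
  assumes "\<bar>X\<bar> \<le> \<delta> / 2"
  shows "morse_inv' (- X) = morse_inv' X"
  unfolding morse_inv'_def morse_inv_odd[OF assms] morse'_even ..

end

section \<open>Hamiltonian parametrisations and moments\<close>

lemma ham_field_Ham: "ham_field Ham p = (2 * snd p, - pot' (fst p))"
proof -
  obtain x y where p: "p = (x, y)"
    by force
  have "((\<lambda>y. Ham (x, y)) has_real_derivative 2 * y) (at y)"
    by (auto intro!: derivative_eq_intros)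
  moreover have "((\<lambda>x. Ham (x, y)) has_real_derivative 0 + pot' x) (at x)"
    by (simp only: Ham_Pair) (intro derivative_intros has_real_derivative_pot)
  ultimately show ?thesis
    unfolding ham_field_def p by (simp add: DERIV_imp_deriv)
qed

definition angular_density :: "nat \<Rightarrow> real \<Rightarrow> real \<Rightarrow> real" where
  "angular_density k r \<theta> = morse_inv (r * cos \<theta>) ^ k * morse_inv' (r * cos \<theta>)"

definition angular_moment :: "nat \<Rightarrow> real \<Rightarrow> real" where
  "angular_moment k r = integral {0..2 * pi} (angular_density k r)"

lemma abs_polar_le: "0 \<le> r \<Longrightarrow> \<bar>r * cos (\<theta>::real)\<bar> \<le> r"
  using abs_cos_le_one[of \<theta>] by (simp add: abs_mult mult_left_le)

lemma abs_polar_small: "0 \<le> r \<Longrightarrow> r < \<delta> / 2 \<Longrightarrow> \<bar>r * cos \<theta>\<bar> \<le> \<delta> / 2"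
  using abs_polar_le[of r \<theta>] by linarith

lemma isCont_angular_density:
  assumes "0 \<le> r" "r < \<delta> / 2"
  shows "isCont (angular_density k r) \<theta>"
proof -
  have "\<bar>r * cos \<theta>\<bar> < \<delta> / 2"
    using abs_polar_le[OF assms(1)] assms(2) by (rule le_less_trans)
  then have "isCont (\<lambda>\<theta>. morse_inv (r * cos \<theta>)) \<theta>" "isCont (\<lambda>\<theta>. morse_inv' (r * cos \<theta>)) \<theta>"
    by (auto intro!: continuous_intros isCont_o2[OF _ isCont_morse_inv] isCont_o2[OF _ isCont_morse_inv'])
  then show ?thesis
    unfolding angular_density_def[abs_def] by (intro continuous_intros)
qed

lemma angular_moment_antiderivative:
  assumes "0 \<le> r" "r < \<delta> / 2"
  obtains K where "\<And>\<theta>. (K has_real_derivative angular_density k r \<theta>) (at \<theta>)"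
    "\<And>u. K u - K (u - 2 * pi) = angular_moment k r"
proof -
  obtain K where K: "\<And>\<theta>. (K has_real_derivative angular_density k r \<theta>) (at \<theta>)"
    using continuous_has_antiderivative isCont_angular_density[OF assms] by blast
  moreover have "K u - K (u - 2 * pi) = angular_moment k r" for u
    unfolding angular_moment_def
    by (rule antiderivative_periodic_increment[OF K]) (simp_all add: angular_density_def cos_diff)
  ultimately show thesis
    using that by blast
qed

lemma abs_angular_moment_le:
  assumes "0 \<le> r" "r < \<delta> / 2"
  shows "\<bar>angular_moment m r\<bar> \<le> 4 * pi * (2 * r) ^ m"
proof -
  have "\<bar>angular_density m r \<theta>\<bar> \<le> 2 * (2 * r) ^ m" for \<theta>
  proof -
    have X: "\<bar>r * cos \<theta>\<bar> \<le> \<delta> / 2" "\<bar>r * cos \<theta>\<bar> \<le> r"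
      using abs_polar_small[OF assms] abs_polar_le[OF assms(1)] by auto
    have "\<bar>morse_inv (r * cos \<theta>)\<bar> \<le> 2 * r"
      using abs_morse_inv_le(1)[OF X(1)] X(2) by simp
    then have "\<bar>morse_inv (r * cos \<theta>)\<bar> ^ m \<le> (2 * r) ^ m"
      by (intro power_mono) auto
    moreover have "\<bar>morse_inv' (r * cos \<theta>)\<bar> \<le> 2"
      using morse_inv'_bounds[OF X(1)] by simp
    ultimately show ?thesis
      unfolding angular_density_def abs_mult power_abs using assms(1)
      by (simp add: mult.commute mult_mono)
  qed
  then have "norm (integral {0..2 * pi} (angular_density m r)) \<le> 2 * (2 * r) ^ m * (2 * pi - 0)"
    using isCont_angular_density[OF assms]
    by (intro integral_bound continuous_at_imp_continuous_on) auto
  then show ?thesis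
    unfolding angular_moment_def by (simp add: mult_ac)
qed

lemma angular_moment_0_expansion:
  obtains C where "\<And>r. 0 \<le> r \<Longrightarrow> r < \<delta> / 2 \<Longrightarrow> \<bar>angular_moment 0 r - 2 * pi\<bar> \<le> C * r\<^sup>2"
proof -
  obtain C where C: "0 \<le> C" "\<And>X. \<bar>X\<bar> \<le> \<delta> / 2 \<Longrightarrow> \<bar>morse_inv' X - 1 + a 1 * X\<bar> \<le> C * X\<^sup>2"
    using morse_inv'_expansion by blast
  have "\<bar>angular_moment 0 r - 2 * pi\<bar> \<le> 2 * pi * C * r\<^sup>2" if r: "0 \<le> r" "r < \<delta> / 2" for r
  proof -
    \<comment> \<open>the linear term of \<open>morse_inv'\<close> integrates to zero over a period\<close>
    have "((\<lambda>\<theta>. 1 - a 1 * r * cos \<theta>) has_integral (2 * pi - a 1 * r * sin (2 * pi)) - (0 - a 1 * r * sin 0)) {0..2 * pi}"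
      by (intro fundamental_theorem_of_calculus)
         (auto intro!: derivative_eq_intros simp: has_real_derivative_iff_has_vector_derivative[symmetric])
    then have lin: "((\<lambda>\<theta>. 1 - a 1 * r * cos \<theta>) has_integral 2 * pi) {0..2 * pi}"
      by simp
    have "isCont (\<lambda>\<theta>. morse_inv' (r * cos \<theta>)) \<theta>" for \<theta>
      using isCont_angular_density[OF r, where k = 0] by (simp add: angular_density_def[abs_def])
    then have cont: "continuous_on {0..2 * pi} (\<lambda>\<theta>. morse_inv' (r * cos \<theta>))"
      by (simp add: continuous_at_imp_continuous_on)
    have "angular_moment 0 r - 2 * pi = integral {0..2 * pi} (\<lambda>\<theta>. morse_inv' (r * cos \<theta>) - (1 - a 1 * r * cos \<theta>))"
      unfolding angular_moment_def angular_density_def power_0 mult_1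
      by (subst integral_diff) (use integrable_continuous_real[OF cont] lin integral_unique[OF lin] in auto)
    also have "norm \<dots> \<le> C * r\<^sup>2 * (2 * pi - 0)"
    proof (rule integral_bound)
      show "continuous_on {0..2 * pi} (\<lambda>\<theta>. morse_inv' (r * cos \<theta>) - (1 - a 1 * r * cos \<theta>))"
        using cont by (intro continuous_intros)
      fix \<theta>
      have X: "\<bar>r * cos \<theta>\<bar> \<le> \<delta> / 2" "\<bar>r * cos \<theta>\<bar> \<le> r"
        using abs_polar_small[OF r] abs_polar_le[OF r(1)] by auto
      have "(r * cos \<theta>)\<^sup>2 \<le> r\<^sup>2"
        using power_mono[OF X(2) abs_ge_zero, of 2] by simp
      then show "norm (morse_inv' (r * cos \<theta>) - (1 - a 1 * r * cos \<theta>)) \<le> C * r\<^sup>2"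
        using C(2)[OF X(1)] mult_left_mono[of "(r * cos \<theta>)\<^sup>2" "r\<^sup>2" C] C(1)
        by (simp add: algebra_simps)
    qed simp
    finally show ?thesis
      by (simp add: algebra_simps)
  qed
  then show thesis
    by (rule that)
qed

lemma angular_moment_odd_eq_0:
  assumes odd_coeffs_zero: "\<forall>j\<in>{1..genus}. a (2 * j - 1) = 0" and r: "0 \<le> r" "r < \<delta> / 2"
  shows "angular_moment (2 * k + 1) r = 0"
proof -
  obtain K where K: "\<And>\<theta>. (K has_real_derivative angular_density (2 * k + 1) r \<theta>) (at \<theta>)"
    and K_period: "\<And>u. K u - K (u - 2 * pi) = angular_moment (2 * k + 1) r"
    using angular_moment_antiderivative[OF r] by blast
  have reflect: "angular_density (2 * k + 1) r (pi - \<theta>) = - angular_density (2 * k + 1) r \<theta>" for \<theta>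
  proof -
    have "\<bar>r * cos \<theta>\<bar> \<le> \<delta> / 2"
      by (rule abs_polar_small[OF r])
    then show ?thesis
      unfolding angular_density_def using morse_inv_odd[OF odd_coeffs_zero] morse_inv'_even[OF odd_coeffs_zero]
      by simp
  qed
  have "\<exists>c. \<forall>\<theta>\<in>UNIV. K \<theta> - K (pi - \<theta>) = c"
  proof (rule has_field_derivative_zero_constant)
    fix \<theta> :: real
    have "((\<lambda>\<theta>. K \<theta> - K (pi - \<theta>)) has_real_derivative
        angular_density (2 * k + 1) r \<theta> - angular_density (2 * k + 1) r (pi - \<theta>) * (0 - 1)) (at \<theta>)"
      by (intro derivative_intros K DERIV_chain2[OF K])
    then show "((\<lambda>\<theta>. K \<theta> - K (pi - \<theta>)) has_real_derivative 0) (at \<theta> within UNIV)"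
      using reflect by simp
  qed auto
  then obtain c where c: "\<And>\<theta>. K \<theta> - K (pi - \<theta>) = c"
    by blast
  have "angular_moment (2 * k + 1) r = K 0 - K (0 - 2 * pi)"
    using K_period[of 0] by simp
  also have "\<dots> = K pi - K (pi + 2 * pi)"
    using c[of 0] c[of "- 2 * pi"] by (simp add: algebra_simps)
  also have "\<dots> = - angular_moment (2 * k + 1) r"
    using K_period[of "3 * pi"] by (simp add: algebra_simps)
  finally show ?thesis
    by simp
qed

lemma loop_derivative_identity:
  assumes "y\<^sup>2 + pot x = t"
  shows "real j * x ^ (j - 1) * (2 * y) * y - x ^ j * pot' x
    = real j * t * (2 * x ^ (j - 1)) - real (j + 1) * (2 * x ^ (j + 1))
      - (\<Sum>i=1..d. (real j + (real i + 2) / 2) * a i * (2 * x ^ (j + i + 1)))"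
proof -
  have pw: "real j * x ^ (j - 1) * x ^ (m + 2) = real j * x ^ (j + m + 1)" for m
    by (cases j) (auto simp: power_add[symmetric] algebra_simps)
  have "real j * x ^ (j - 1) * pot x = real j * x ^ (j - 1) * x ^ (0 + 2)
      + (\<Sum>i=1..d. a i * (real j * x ^ (j - 1) * x ^ (i + 2)))"
    unfolding pot_def by (simp add: algebra_simps sum_distrib_left power2_eq_square)
  also have "\<dots> = real j * x ^ (j + 1) + (\<Sum>i=1..d. real j * a i * x ^ (j + i + 1))"
    unfolding pw by (simp add: algebra_simps)
  finally have "real j * x ^ (j - 1) * pot x = real j * x ^ (j + 1) + (\<Sum>i=1..d. real j * a i * x ^ (j + i + 1))" .
  moreover have "x ^ j * pot' x = 2 * x ^ (j + 1) + (\<Sum>i=1..d. real (i + 2) * a i * x ^ (j + i + 1))"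
    unfolding pot'_def by (simp add: algebra_simps sum_distrib_left power_add)
  moreover have "real j * x ^ (j - 1) * (2 * y) * y = 2 * real j * x ^ (j - 1) * (y * y)"
    by (simp add: mult_ac)
  then have "real j * x ^ (j - 1) * (2 * y) * y - x ^ j * pot' x
      = 2 * real j * x ^ (j - 1) * (t - pot x) - x ^ j * pot' x"
    using assms by (simp add: power2_eq_square)
  ultimately have "real j * x ^ (j - 1) * (2 * y) * y - x ^ j * pot' x
      = real j * t * (2 * x ^ (j - 1)) - 2 * real j * x ^ (j + 1)
        - 2 * (\<Sum>i=1..d. real j * a i * x ^ (j + i + 1))
        - 2 * x ^ (j + 1) - (\<Sum>i=1..d. real (i + 2) * a i * x ^ (j + i + 1))"
    by (simp add: algebra_simps)
  also have "\<dots> = real j * t * (2 * x ^ (j - 1)) - real (j + 1) * (2 * x ^ (j + 1))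
      - (\<Sum>i=1..d. (real j + (real i + 2) / 2) * a i * (2 * x ^ (j + i + 1)))"
    by (simp add: algebra_simps sum_distrib_left sum.distrib[symmetric] add_divide_distrib)
  finally show ?thesis .
qed


(* The integral I_k(t) of the paper, see oval_integral_eq_moment. *)
definition moment :: "nat \<Rightarrow> real \<Rightarrow> real" where
  "moment k t = angular_moment k (sqrt t)"

end

locale oval_level = oscillator +
  fixes t :: real
  assumes t_pos: "0 < t" and t_less_tmax: "t < tmax"
begin

definition radius :: real where
  "radius = sqrt t"

lemma radius_pos: "0 < radius"
  unfolding radius_def using t_pos by simp

lemma radius_sq: "radius\<^sup>2 = t"
  unfolding radius_def using t_pos by simp

lemma radius_small: "radius < \<delta> / 4"
  unfolding radius_def by (rule sqrt_less_delta[OF t_less_tmax])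

lemma abs_polar_less: "\<bar>radius * cos v\<bar> < \<delta> / 2"
  using abs_polar_le[of radius v] radius_pos radius_small delta_pos by simp

lemma central_oval: "central_oval Ham t = oval t"
  by (rule central_oval_eq_oval[OF t_pos t_less_tmax])

lemma oval_polar:
  assumes "(x, y) \<in> oval t"
  obtains v where "0 \<le> v" "v < 2 * pi" "morse x = radius * cos v" "y = - radius * sin v"
proof -
  have x: "\<bar>x\<bar> < \<delta>" "y\<^sup>2 + (morse x)\<^sup>2 = radius\<^sup>2"
    using assms pot_eq_morse_sq[of x] radius_sq unfolding oval_def by auto
  have "(morse x / radius)\<^sup>2 + (- y / radius)\<^sup>2 = 1"
    using x radius_pos by (simp add: power_divide field_simps)
  then obtain v where "0 \<le> v" "v < 2 * pi" "morse x / radius = cos v" "- y / radius = sin v"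
    using sincos_total_2pi by metis
  then show thesis
    using that radius_pos by (simp add: field_simps)
qed

definition polar_curve :: "(real \<Rightarrow> real) \<Rightarrow> real \<Rightarrow> real \<times> real" where
  "polar_curve u s = (morse_inv (radius * cos (u s)), - radius * sin (u s))"

lemma polar_curve_in_oval: "polar_curve u s \<in> oval t"
proof -
  define X where "X = radius * cos (u s)"
  have X: "\<bar>X\<bar> \<le> \<delta> / 2"
    unfolding X_def using abs_polar_less less_imp_le by blast
  have "(- radius * sin (u s))\<^sup>2 + X\<^sup>2 = radius\<^sup>2"
    unfolding X_def by (simp add: power_mult_distrib) (metis distrib_left mult_1_right sin_cos_squared_add)
  then have "(- radius * sin (u s))\<^sup>2 + X\<^sup>2 = t"
    using radius_sq by simp
  moreover have "pot (morse_inv X) = X\<^sup>2"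
    using abs_morse_inv_le[OF X] morse_morse_inv[OF X] pot_eq_morse_sq[of "morse_inv X"] by simp
  ultimately show ?thesis
    unfolding polar_curve_def oval_def X_def[symmetric] using abs_morse_inv_le(2)[OF X] by simp
qed

lemma polar_curve_has_vector_derivative:
  assumes u: "(u has_real_derivative 2 / morse_inv' (radius * cos (u s))) (at s)"
  shows "(polar_curve u has_vector_derivative ham_field Ham (polar_curve u s)) (at s)"
proof -
  define X where "X = radius * cos (u s)"
  have X: "\<bar>X\<bar> < \<delta> / 2"
    unfolding X_def by (rule abs_polar_less)
  have m: "morse_inv' X \<noteq> 0"
    using morse_inv'_bounds[of X] X by auto
  have "((\<lambda>s. morse_inv (radius * cos (u s))) has_real_derivative
      morse_inv' X * (radius * (- sin (u s) * (2 / morse_inv' X)))) (at s)"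
    using DERIV_chain2[OF has_real_derivative_morse_inv[OF X, unfolded X_def]
        DERIV_cmult[OF DERIV_chain2[OF DERIV_cos u], of radius]]
    unfolding X_def by simp
  then have x': "((\<lambda>s. morse_inv (radius * cos (u s))) has_vector_derivative
      2 * (- radius * sin (u s))) (at s)"
    using m by (simp add: has_real_derivative_iff_has_vector_derivative[symmetric] field_simps)
  have "((\<lambda>s. - radius * sin (u s)) has_real_derivative
      - radius * (cos (u s) * (2 / morse_inv' X))) (at s)"
    using DERIV_cmult[OF DERIV_chain2[OF DERIV_sin u], of "- radius"] unfolding X_def by simp
  moreover have "radius * (cos (u s) * (2 / morse_inv' X)) = pot' (morse_inv X)"
    using pot'_eq[of "morse_inv X"] abs_morse_inv_le[of X] morse_morse_inv[of X] X
    unfolding morse_inv'_def X_def by simp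
  ultimately have y': "((\<lambda>s. - radius * sin (u s)) has_vector_derivative - pot' (morse_inv X)) (at s)"
    by (simp add: has_real_derivative_iff_has_vector_derivative[symmetric])
  show ?thesis
    unfolding ham_field_Ham polar_curve_def X_def[symmetric]
    using has_vector_derivative_Pair[OF x' y'] by simp
qed

lemma polar_curve_inj_on:
  assumes "strict_mono u" "u ` S \<subseteq> {0..<2 * pi}"
  shows "inj_on (polar_curve u) S"
proof (rule inj_onI)
  fix s1 s2 assume s: "s1 \<in> S" "s2 \<in> S" "polar_curve u s1 = polar_curve u s2"
  then have e: "morse_inv (radius * cos (u s1)) = morse_inv (radius * cos (u s2))"
    "radius * sin (u s1) = radius * sin (u s2)"
    unfolding polar_curve_def by simp_all
  have "radius * cos (u s1) = radius * cos (u s2)"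
    using arg_cong[OF e(1), of morse] morse_morse_inv[OF less_imp_le[OF abs_polar_less]] by simp
  then have "sin (u s1) = sin (u s2) \<and> cos (u s1) = cos (u s2)"
    using e(2) radius_pos by simp
  then obtain m :: int where m: "u s1 = u s2 + 2 * pi * m"
    unfolding sin_cos_eq_iff by blast
  have "0 \<le> u s1" "u s1 < 2 * pi" "0 \<le> u s2" "u s2 < 2 * pi"
    using assms(2) s by auto
  then have "2 * pi * real_of_int m < 2 * pi * 1" "2 * pi * (- 1) < 2 * pi * real_of_int m"
    using m by linarith+
  then have "real_of_int m < 1" "- 1 < real_of_int m"
    by (simp_all only: mult_less_cancel_left_pos pi_gt_zero zero_less_numeral mult_pos_pos)
  then have "u s1 = u s2"
    using m by simp
  then show "s1 = s2"
    using strict_mono_eq[OF assms(1)] by blast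
qed

lemma polar_curve_image:
  assumes "u ` S = {0..<2 * pi}"
  shows "polar_curve u ` S = oval t"
proof
  show "polar_curve u ` S \<subseteq> oval t"
    using polar_curve_in_oval by blast
  show "oval t \<subseteq> polar_curve u ` S"
  proof
    fix p assume p: "p \<in> oval t"
    obtain x y where xy: "p = (x, y)"
      by force
    then obtain v where v: "0 \<le> v" "v < 2 * pi" "morse x = radius * cos v" "y = - radius * sin v"
      using oval_polar p by blast
    then have "v \<in> u ` S"
      using assms by simp
    then obtain s where s: "s \<in> S" "u s = v"
      by blast
    have "\<bar>x\<bar> \<le> \<delta>"
      using p xy unfolding oval_def by simp
    then have "polar_curve u s = p"
      using morse_inv_morse[of x] v xy s unfolding polar_curve_def by simp
    then show "p \<in> polar_curve u ` S"
      using s by blast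
  qed
qed

lemma polar_angle_flow:
  obtains u where "\<And>s. (u has_real_derivative 2 / morse_inv' (radius * cos (u s))) (at s)"
    "u 0 = 0" "strict_mono u" "surj u"
proof -
  define speed where "speed v = morse_inv' (radius * cos v) / 2" for v
  have speed_ge: "1 / 4 \<le> speed v" for v
    unfolding speed_def using morse_inv'_bounds(1)[of "radius * cos v"] abs_polar_less[of v] by simp
  have "isCont speed v" for v
    using isCont_o2[where f = "\<lambda>v. radius * cos v" and g = morse_inv'] isCont_morse_inv'[OF abs_polar_less[of v]]
    unfolding speed_def[abs_def] by (auto intro!: continuous_intros)
  then obtain K where K: "\<And>v. (K has_real_derivative speed v) (at v)"
    using continuous_has_antiderivative by blast
  \<comment> \<open>\<open>G v\<close> is the time needed to sweep the polar angle from 0 to \<open>v\<close>\<close>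
  define G where "G v = K v - K 0" for v
  have G: "(G has_real_derivative speed v) (at v)" for v
    unfolding G_def[abs_def] using K[of v] by (auto intro!: derivative_eq_intros)
  obtain u where Gu: "\<And>s. G (u s) = s" and uG: "\<And>v. u (G v) = v"
    and u: "\<And>s. (u has_real_derivative inverse (speed (u s))) (at s)"
    using inverse_of_derivative_bounded_below[OF G speed_ge] by auto
  have "strict_mono u"
  proof (rule strict_monoI)
    fix s1 s2 :: real assume "s1 < s2"
    show "u s1 < u s2"
    proof (rule ccontr)
      assume "\<not> u s1 < u s2"
      then have "G (u s2) \<le> G (u s1)"
        using strict_mono_less_eq[OF derivative_bounded_below_strict_mono_surj(1)[OF G speed_ge]] by simp
      then show False
        using Gu \<open>s1 < s2\<close> by simp
    qed
  qed
  moreover have "surj u"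
    by (rule surjI[of u G]) (rule uG)
  moreover have "u 0 = 0"
    using uG[of 0] by (simp add: G_def)
  moreover have "(u has_real_derivative 2 / morse_inv' (radius * cos (u s))) (at s)" for s
    using u[of s] by (simp add: speed_def inverse_eq_divide)
  ultimately show thesis
    using that by blast
qed

lemma oval_param_exists: "\<exists>\<gamma> P. oval_param Ham t \<gamma> P"
proof -
  obtain u where u: "\<And>s. (u has_real_derivative 2 / morse_inv' (radius * cos (u s))) (at s)"
    and u0: "u 0 = 0" and mono: "strict_mono u" and "surj u"
    using polar_angle_flow by blast
  obtain P where P: "u P = 2 * pi"
    using surjD[OF \<open>surj u\<close>] by metis
  have "0 < P"
    using strict_mono_less[OF mono, of 0 P] u0 P by simp
  have image: "u ` {0..<P} = {0..<2 * pi}"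
    using strict_mono_surj_image_atLeastLessThan[OF mono \<open>surj u\<close>, of 0 P] u0 P by simp
  moreover have "(polar_curve u has_vector_derivative ham_field Ham (polar_curve u s)) (at s)" for s
    by (rule polar_curve_has_vector_derivative[OF u])
  moreover have "polar_curve u P = polar_curve u 0"
    using u0 P unfolding polar_curve_def by simp
  moreover have "inj_on (polar_curve u) {0..<P}"
    using image by (intro polar_curve_inj_on[OF mono]) simp
  moreover have "polar_curve u ` {0..<P} = oval t"
    by (rule polar_curve_image[OF image])
  ultimately have "oval_param Ham t (polar_curve u) P"
    unfolding oval_param_def central_oval using \<open>0 < P\<close> by blast
  then show ?thesis
    by blast
qed

end

locale oval_loop = oval_level +
  fixes \<gamma> :: "real \<Rightarrow> real \<times> real" and P :: real
  assumes param: "oval_param Ham t \<gamma> P"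
begin

abbreviation loop_x :: "real \<Rightarrow> real" where
  "loop_x s \<equiv> fst (\<gamma> s)"

abbreviation loop_y :: "real \<Rightarrow> real" where
  "loop_y s \<equiv> snd (\<gamma> s)"

lemma period_pos: "0 < P"
  and loop_closed: "\<gamma> P = \<gamma> 0"
  and loop_inj: "inj_on \<gamma> {0..<P}"
  using param unfolding oval_param_def by auto

lemma loop_has_vector_derivative:
  "(\<gamma> has_vector_derivative (2 * loop_y s, - pot' (loop_x s))) (at s)"
  using param ham_field_Ham unfolding oval_param_def by metis

lemma loop_x_deriv: "(loop_x has_real_derivative 2 * loop_y s) (at s)"
  using has_vector_derivative_fst[OF loop_has_vector_derivative] by simp

lemma loop_y_deriv: "(loop_y has_real_derivative - pot' (loop_x s)) (at s)"
  using has_vector_derivative_snd[OF loop_has_vector_derivative] by simp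

lemma loop_velocity_x: "fst (vector_derivative \<gamma> (at s)) = 2 * loop_y s"
  using vector_derivative_at[OF loop_has_vector_derivative] by simp

lemma loop_in_oval:
  assumes "s \<in> {0..P}"
  shows "\<gamma> s \<in> oval t"
proof -
  have "\<gamma> s \<in> \<gamma> ` {0..<P}"
    using assms loop_closed period_pos by (cases "s = P") auto
  then show ?thesis
    using param central_oval unfolding oval_param_def by auto
qed

lemma abs_loop_x_less: "s \<in> {0..P} \<Longrightarrow> \<bar>loop_x s\<bar> < \<delta>"
  using loop_in_oval unfolding oval_def by (auto simp: case_prod_beta)

definition loop_angle0 :: real where
  "loop_angle0 = (SOME v. morse (loop_x 0) = radius * cos v \<and> loop_y 0 = - radius * sin v)"

definition loop_angle :: "real \<Rightarrow> real" where
  "loop_angle s = loop_angle0 + integral {0..s} (\<lambda>s. 2 * morse' (loop_x s))"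

lemma loop_angle0: "morse (loop_x 0) = radius * cos loop_angle0 \<and> loop_y 0 = - radius * sin loop_angle0"
proof -
  have "(loop_x 0, loop_y 0) \<in> oval t"
    using loop_in_oval[of 0] period_pos by simp
  then obtain v where "morse (loop_x 0) = radius * cos v \<and> loop_y 0 = - radius * sin v"
    by (rule oval_polar) auto
  then show ?thesis
    unfolding loop_angle0_def by (rule someI)
qed

lemma angular_speed_bounds:
  assumes "s \<in> {0..P}"
  shows "1 \<le> 2 * morse' (loop_x s)"
  using morse'_bounds(1)[of "loop_x s"] abs_loop_x_less[OF assms] by simp

lemma continuous_on_angular_speed: "continuous_on {0..P} (\<lambda>s. 2 * morse' (loop_x s))"
proof (intro continuous_at_imp_continuous_on ballI)
  fix s assume "s \<in> {0..P}"
  then have "isCont (\<lambda>s. morse' (loop_x s)) s"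
    using isCont_o2[OF DERIV_isCont[OF loop_x_deriv] isCont_morse'] abs_loop_x_less by force
  then show "isCont (\<lambda>s. 2 * morse' (loop_x s)) s"
    by (intro continuous_intros)
qed

lemma loop_angle_deriv:
  assumes "s \<in> {0..P}"
  shows "(loop_angle has_real_derivative 2 * morse' (loop_x s)) (at s within {0..P})"
  using DERIV_add[OF DERIV_const integral_has_real_derivative[OF continuous_on_angular_speed assms]]
  unfolding loop_angle_def[abs_def] by (simp only: add_0_left)

lemma loop_angle_growth:
  assumes "0 \<le> s1" "s1 \<le> s2" "s2 \<le> P"
  shows "s2 - s1 \<le> loop_angle s2 - loop_angle s1"
proof -
  have int: "(\<lambda>s. 2 * morse' (loop_x s)) integrable_on {a..b}" if "{a..b} \<subseteq> {0..P}" for a b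
    using continuous_on_subset[OF continuous_on_angular_speed that] integrable_continuous_real by blast
  have "integral {0..s1} (\<lambda>s. 2 * morse' (loop_x s)) + integral {s1..s2} (\<lambda>s. 2 * morse' (loop_x s))
      = integral {0..s2} (\<lambda>s. 2 * morse' (loop_x s))"
    using assms by (intro Henstock_Kurzweil_Integration.integral_combine int) auto
  moreover have "integral {s1..s2} (\<lambda>_. 1) \<le> integral {s1..s2} (\<lambda>s. 2 * morse' (loop_x s))"
    using assms angular_speed_bounds by (intro integral_le int) auto
  ultimately show ?thesis
    using assms unfolding loop_angle_def by simp
qed

lemma continuous_on_loop_angle: "continuous_on {0..P} loop_angle"
  using loop_angle_deriv by (meson DERIV_continuous continuous_on_eq_continuous_within)

lemma loop_polar:
  assumes "s \<in> {0..P}"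
  shows "morse (loop_x s) = radius * cos (loop_angle s)" "loop_y s = - radius * sin (loop_angle s)"
proof -
  define E where "E s = (morse (loop_x s) - radius * cos (loop_angle s))\<^sup>2
      + (loop_y s + radius * sin (loop_angle s))\<^sup>2" for s
  have "(E has_real_derivative 0) (at s within {0..P})" if s: "s \<in> {0..P}" for s
  proof -
    have x: "\<bar>loop_x s\<bar> < \<delta>"
      by (rule abs_loop_x_less[OF s])
    have "((\<lambda>s. morse (loop_x s)) has_real_derivative morse' (loop_x s) * (2 * loop_y s)) (at s within {0..P})"
      using DERIV_chain2[OF has_real_derivative_morse loop_x_deriv] x
      by (auto intro: has_field_derivative_at_within)
    note * = this has_field_derivative_at_within[OF loop_y_deriv] loop_angle_deriv[OF s]
    have "(E has_real_derivative
        2 * (morse (loop_x s) - radius * cos (loop_angle s))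
          * (morse' (loop_x s) * (2 * loop_y s) + radius * sin (loop_angle s) * (2 * morse' (loop_x s)))
        + 2 * (loop_y s + radius * sin (loop_angle s))
          * (- pot' (loop_x s) + radius * cos (loop_angle s) * (2 * morse' (loop_x s))))
        (at s within {0..P})"
      unfolding E_def[abs_def] by (rule derivative_eq_intros * refl)+ (simp_all add: algebra_simps)
    moreover have "pot' (loop_x s) = 2 * morse (loop_x s) * morse' (loop_x s)"
      by (rule pot'_eq[OF x])
    ultimately show ?thesis
      by (simp add: algebra_simps)
  qed
  then obtain c where c: "\<And>s. s \<in> {0..P} \<Longrightarrow> E s = c"
    using has_field_derivative_zero_constant[of "{0..P}" E] by auto
  have "E s = c" "E 0 = c"
    using c assms period_pos by simp_all
  moreover have "E 0 = 0"
    unfolding E_def loop_angle_def using loop_angle0 by simp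
  ultimately have "E s = 0"
    by simp
  then show "morse (loop_x s) = radius * cos (loop_angle s)" "loop_y s = - radius * sin (loop_angle s)"
    unfolding E_def by (simp_all add: sum_power2_eq_zero_iff)
qed

lemma loop_angle_period: "loop_angle P = loop_angle 0 + 2 * pi"
proof -
  have "cos (loop_angle P) = cos (loop_angle 0)" "sin (loop_angle P) = sin (loop_angle 0)"
    using loop_polar[of P] loop_polar[of 0] loop_closed period_pos radius_pos by auto
  then obtain m :: int where m: "loop_angle P = loop_angle 0 + 2 * pi * m"
    using sin_cos_eq_iff by metis
  have "P \<le> loop_angle P - loop_angle 0"
    using loop_angle_growth[of 0 P] period_pos by simp
  then have "0 < 2 * pi * real_of_int m"
    using m period_pos by linarith
  then have "0 < m"
    by (simp add: zero_less_mult_iff)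
  moreover have "\<not> 2 \<le> m"
  proof
    assume "2 \<le> m"
    then have "2 * pi * 2 \<le> 2 * pi * real_of_int m"
      by (intro mult_left_mono) auto
    then have less: "loop_angle 0 + 2 * pi < loop_angle P"
      using m pi_gt_zero by linarith
    then obtain s where s: "0 \<le> s" "s \<le> P" "loop_angle s = loop_angle 0 + 2 * pi"
      using IVT'[of loop_angle 0 "loop_angle 0 + 2 * pi" P] continuous_on_loop_angle period_pos
      by auto
    then have "s \<noteq> 0" "s \<noteq> P"
      using less by auto
    have "morse (loop_x s) = morse (loop_x 0)" "loop_y s = loop_y 0"
      using loop_polar[of s] loop_polar[of 0] s period_pos by simp_all
    moreover have "\<bar>loop_x s\<bar> \<le> \<delta>" "\<bar>loop_x 0\<bar> \<le> \<delta>"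
      using abs_loop_x_less[of s] abs_loop_x_less[of 0] s period_pos by simp_all
    ultimately have "\<gamma> s = \<gamma> 0"
      using morse_inj[of "loop_x s" "loop_x 0"] by (simp add: prod_eq_iff)
    moreover have "s \<in> {0..<P}" "0 \<in> {0..<P}"
      using s \<open>s \<noteq> P\<close> period_pos by auto
    ultimately show False
      using inj_onD[OF loop_inj] \<open>s \<noteq> 0\<close> by blast
  qed
  ultimately have "m = 1"
    by simp
  then show ?thesis
    using m by simp
qed

lemma loop_x_polar:
  assumes "s \<in> {0..P}"
  shows "morse_inv (radius * cos (loop_angle s)) = loop_x s"
  using morse_inv_morse[of "loop_x s"] abs_loop_x_less[OF assms] loop_polar(1)[OF assms] by simp

lemma loop_moment: "((\<lambda>s. 2 * loop_x s ^ k) has_integral angular_moment k radius) {0..P}"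
proof -
  obtain K where K: "\<And>\<theta>. (K has_real_derivative angular_density k radius \<theta>) (at \<theta>)"
    and K_period: "\<And>u. K u - K (u - 2 * pi) = angular_moment k radius"
    using angular_moment_antiderivative[of radius k] radius_pos radius_small by auto
  \<comment> \<open>change of variables from time to polar angle\<close>
  have "((\<lambda>s. 2 * loop_x s ^ k) has_integral K (loop_angle P) - K (loop_angle 0)) {0..P}"
  proof (rule fundamental_theorem_of_calculus)
    show "0 \<le> P"
      using period_pos by simp
    fix s assume s: "s \<in> {0..P}"
    have "((\<lambda>s. K (loop_angle s)) has_real_derivative
        angular_density k radius (loop_angle s) * (2 * morse' (loop_x s))) (at s within {0..P})"
      by (rule DERIV_chain2[OF K loop_angle_deriv[OF s]])
    moreover have "angular_density k radius (loop_angle s) * (2 * morse' (loop_x s)) = 2 * loop_x s ^ k"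
      using morse'_bounds(1)[of "loop_x s"] abs_loop_x_less[OF s]
      unfolding angular_density_def morse_inv'_def loop_x_polar[OF s] by simp
    ultimately show "((\<lambda>s. K (loop_angle s)) has_vector_derivative 2 * loop_x s ^ k) (at s within {0..P})"
      by (simp add: has_real_derivative_iff_has_vector_derivative[symmetric])
  qed
  then show ?thesis
    using K_period[of "loop_angle P"] loop_angle_period by simp
qed

lemma loop_oval_integral:
  "integral {0..P} (\<lambda>s. loop_x s ^ k / loop_y s * fst (vector_derivative \<gamma> (at s)))
    = angular_moment k radius"
proof -
  have "inj_on loop_angle {0..P}"
  proof (rule inj_onI)
    fix s1 s2 assume "s1 \<in> {0..P}" "s2 \<in> {0..P}" "loop_angle s1 = loop_angle s2"
    then show "s1 = s2"
      using loop_angle_growth[of s1 s2] loop_angle_growth[of s2 s1] by (cases s1 s2 rule: linorder_cases) auto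
  qed
  \<comment> \<open>the integrand \<open>x^k dx/y\<close> equals \<open>2 x^k\<close> except where the loop crosses the x-axis\<close>
  define N where "N = loop_angle -` {\<theta>. \<theta> \<in> {loop_angle 0..loop_angle 0 + 2 * pi} \<and> sin \<theta> = 0} \<inter> {0..P}"
  have "finite N"
    unfolding N_def by (intro finite_vimage_IntI finite_sin_zeros \<open>inj_on loop_angle {0..P}\<close>)
  have "integral {0..P} (\<lambda>s. loop_x s ^ k / loop_y s * fst (vector_derivative \<gamma> (at s)))
      = integral {0..P} (\<lambda>s. 2 * loop_x s ^ k)"
  proof (rule integral_spike[OF negligible_finite[OF \<open>finite N\<close>]])
    fix s assume s: "s \<in> {0..P} - N"
    then have "loop_angle 0 \<le> loop_angle s" "loop_angle s \<le> loop_angle 0 + 2 * pi"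
      using loop_angle_growth[of 0 s] loop_angle_growth[of s P] loop_angle_period by auto
    then have "sin (loop_angle s) \<noteq> 0"
      using s unfolding N_def by auto
    then have "loop_y s \<noteq> 0"
      using loop_polar(2)[of s] s radius_pos by auto
    then show "2 * loop_x s ^ k = loop_x s ^ k / loop_y s * fst (vector_derivative \<gamma> (at s))"
      unfolding loop_velocity_x by simp
  qed
  also have "\<dots> = angular_moment k radius"
    by (rule integral_unique[OF loop_moment])
  finally show ?thesis .
qed

lemma loop_recurrence:
  "real (j + 1) * angular_moment (j + 1) radius = real j * t * angular_moment (j - 1) radius
    - (\<Sum>i=1..d. (real j + (real i + 2) / 2) * a i * angular_moment (j + i + 1) radius)"
proof -
  define D where "D s = real j * loop_x s ^ (j - 1) * (2 * loop_y s) * loop_y s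
      - loop_x s ^ j * pot' (loop_x s)" for s
  \<comment> \<open>\<open>D\<close> is the time derivative of \<open>x^j y\<close>, which returns to its initial value\<close>
  have "(D has_integral loop_x P ^ j * loop_y P - loop_x 0 ^ j * loop_y 0) {0..P}"
  proof (rule fundamental_theorem_of_calculus)
    show "0 \<le> P"
      using period_pos by simp
    fix s
    have "((\<lambda>s. loop_x s ^ j * loop_y s) has_real_derivative D s) (at s)"
      using DERIV_mult[OF DERIV_power[OF loop_x_deriv, of j] loop_y_deriv]
      unfolding D_def by (simp add: algebra_simps)
    then show "((\<lambda>s. loop_x s ^ j * loop_y s) has_vector_derivative D s) (at s within {0..P})"
      by (simp add: has_real_derivative_iff_has_vector_derivative[symmetric] has_field_derivative_at_within)
  qed
  then have "(D has_integral 0) {0..P}"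
    using loop_closed by simp
  moreover have "((\<lambda>s. real j * t * (2 * loop_x s ^ (j - 1)) - real (j + 1) * (2 * loop_x s ^ (j + 1))
      - (\<Sum>i=1..d. (real j + (real i + 2) / 2) * a i * (2 * loop_x s ^ (j + i + 1))))
    has_integral (real j * t * angular_moment (j - 1) radius - real (j + 1) * angular_moment (j + 1) radius
      - (\<Sum>i=1..d. (real j + (real i + 2) / 2) * a i * angular_moment (j + i + 1) radius))) {0..P}"
    by (intro has_integral_diff has_integral_mult_right has_integral_sum loop_moment) auto
  then have "(D has_integral (real j * t * angular_moment (j - 1) radius - real (j + 1) * angular_moment (j + 1) radius
      - (\<Sum>i=1..d. (real j + (real i + 2) / 2) * a i * angular_moment (j + i + 1) radius))) {0..P}"
  proof (rule has_integral_eq[rotated])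
    fix s assume "s \<in> {0..P}"
    then have "(loop_y s)\<^sup>2 + pot (loop_x s) = t"
      using loop_in_oval unfolding oval_def by (auto simp: case_prod_beta)
    then show "real j * t * (2 * loop_x s ^ (j - 1)) - real (j + 1) * (2 * loop_x s ^ (j + 1))
      - (\<Sum>i=1..d. (real j + (real i + 2) / 2) * a i * (2 * loop_x s ^ (j + i + 1))) = D s"
      unfolding D_def by (rule loop_derivative_identity[symmetric])
  qed
  ultimately have "0 = real j * t * angular_moment (j - 1) radius - real (j + 1) * angular_moment (j + 1) radius
      - (\<Sum>i=1..d. (real j + (real i + 2) / 2) * a i * angular_moment (j + i + 1) radius)"
    by (rule has_integral_unique)
  then show ?thesis
    by linarith
qed

end

context oval_level
begin

lemma oval_loop_intro: "oval_param Ham t \<gamma> P \<Longrightarrow> oval_loop a d t \<gamma> P"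
  by (intro oval_loop.intro oval_loop_axioms.intro oval_level_axioms)

lemma moment_eq_angular_moment: "moment k t = angular_moment k radius"
  unfolding moment_def radius_def ..

lemma oval_integral_eq_moment: "oval_integral Ham k t = moment k t"
proof -
  obtain \<gamma> P where \<gamma>: "oval_param Ham t \<gamma> P"
    using oval_param_exists by blast
  show ?thesis
    unfolding oval_integral_def moment_eq_angular_moment
  proof (rule the_equality)
    show "\<exists>\<gamma> P. oval_param Ham t \<gamma> P \<and> angular_moment k radius
        = integral {0..P} (\<lambda>s. fst (\<gamma> s) ^ k / snd (\<gamma> s) * fst (vector_derivative \<gamma> (at s)))"
      using \<gamma> oval_loop.loop_oval_integral[OF oval_loop_intro[OF \<gamma>]] by metis
  qed (use oval_loop.loop_oval_integral[OF oval_loop_intro] in metis)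
qed

lemma moment_recurrence:
  "real (j + 1) * moment (j + 1) t = real j * t * moment (j - 1) t
    - (\<Sum>i=1..d. (real j + (real i + 2) / 2) * a i * moment (j + i + 1) t)"
  unfolding moment_eq_angular_moment
  using oval_param_exists oval_loop.loop_recurrence[OF oval_loop_intro] by blast

end

section \<open>Asymptotics of the moments\<close>

lemma dfact_pos: "0 < dfact m"
  by (induction m rule: dfact.induct) auto

lemma cc_Suc: "real (2 * k + 2) * cc (Suc k) = real (2 * k + 1) * cc k"
proof -
  have "dfact (2 * Suc k - 1) = (2 * k + 1) * dfact (2 * k - 1)"
    by (cases k) (simp_all add: numeral_eq_Suc)
  then have A: "real (dfact (2 * Suc k - 1)) = real (2 * k + 1) * real (dfact (2 * k - 1))"
    by (simp only: of_nat_mult)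
  have "dfact (2 * Suc k) = (2 * k + 2) * dfact (2 * k)"
    by (simp add: numeral_eq_Suc)
  then have B: "real (dfact (2 * Suc k)) = real (2 * k + 2) * real (dfact (2 * k))"
    by (simp only: of_nat_mult)
  show ?thesis
    unfolding cc_def A B using dfact_pos[of "2 * k"] by (simp add: field_simps del: of_nat_Suc of_nat_add)
qed

lemma cc_0: "cc 0 = 2 * pi"
  unfolding cc_def by simp

context oscillator
begin

lemma oval_level_intro: "0 < t \<Longrightarrow> t < tmax \<Longrightarrow> oval_level a d t"
  by (intro oval_level.intro oval_level_axioms.intro oscillator_axioms)

lemma eventually_oval_level: "\<forall>\<^sub>F t in at_right 0. 0 < t \<and> t < tmax"
  by (rule eventually_at_right_0_less[OF tmax_pos])

lemma eventually_oval_integral_eq_moment: "\<forall>\<^sub>F t in at_right 0. oval_integral Ham k t = moment k t"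
  using eventually_oval_level
  by eventually_elim (simp add: oval_level.oval_integral_eq_moment[OF oval_level_intro])

lemma sqrt_small:
  assumes "0 < t" "t < tmax"
  shows "sqrt t < \<delta> / 2" "sqrt t \<le> 1"
  using sqrt_less_delta[OF assms(2)] delta_pos delta_le_1 by linarith+

definition odd_coeff_terms :: "nat \<Rightarrow> real \<Rightarrow> real" where
  "odd_coeff_terms j t = (\<Sum>q=1..genus. (real j + real q + 1 / 2) * a (2 * q - 1) * moment (j + 2 * q) t)"

definition even_coeff_terms :: "nat \<Rightarrow> real \<Rightarrow> real" where
  "even_coeff_terms j t = (\<Sum>l=1..d div 2. (real j + real l + 1) * a (2 * l) * moment (j + 2 * l + 1) t)"

definition moment_rhs :: "nat \<Rightarrow> real \<Rightarrow> real" where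
  "moment_rhs j t = real j * t * moment (j - 1) t - odd_coeff_terms j t - even_coeff_terms j t"

lemma eventually_moment_recurrence:
  "\<forall>\<^sub>F t in at_right 0. real (j + 1) * moment (j + 1) t = moment_rhs j t"
proof -
  have odd: "(real j + (real (2 * q - 1) + 2) / 2) * a (2 * q - 1) * moment (j + (2 * q - 1) + 1) t
      = (real j + real q + 1 / 2) * a (2 * q - 1) * moment (j + 2 * q) t" if "q \<in> {1..genus}" for q t
    using that by (simp add: of_nat_diff field_simps)
  have even: "(real j + (real (2 * l) + 2) / 2) * a (2 * l) * moment (j + 2 * l + 1) t
      = (real j + real l + 1) * a (2 * l) * moment (j + 2 * l + 1) t" for l t
    by (simp add: field_simps)
  have split: "(\<Sum>i=1..d. (real j + (real i + 2) / 2) * a i * moment (j + i + 1) t)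
      = odd_coeff_terms j t + even_coeff_terms j t" for t
    unfolding sum_odd_even_split[of _ d] genus_def[symmetric] odd_coeff_terms_def even_coeff_terms_def
    by (intro arg_cong2[where f = "(+)"] sum.cong refl odd even)
  show ?thesis
    using eventually_oval_level
  proof eventually_elim
    case (elim t)
    then show ?case
      using oval_level.moment_recurrence[OF oval_level_intro, of t j]
      unfolding moment_rhs_def split by linarith
  qed
qed

lemma moment_Suc_asymp:
  assumes "(\<lambda>t. moment_rhs j t - real (j + 1) * f t) \<in> O[at_right 0](g)"
  shows "(\<lambda>t. moment (j + 1) t - f t) \<in> O[at_right 0](g)"
proof -
  have "\<forall>\<^sub>F t in at_right 0.
      (1 / real (j + 1)) * (moment_rhs j t - real (j + 1) * f t) = moment (j + 1) t - f t"
    using eventually_moment_recurrence[of j]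
  proof eventually_elim
    case (elim t)
    have nz: "real (j + 1) \<noteq> 0"
      by (simp del: of_nat_Suc)
    with elim have "moment (j + 1) t = moment_rhs j t / real (j + 1)"
      by (simp add: eq_divide_eq mult.commute del: of_nat_Suc)
    then show ?case
      using nz by (simp add: right_diff_distrib del: of_nat_Suc)
  qed
  moreover have "(\<lambda>t. (1 / real (j + 1)) * (moment_rhs j t - real (j + 1) * f t)) \<in> O[at_right 0](g)"
    using assms by (simp only: cmult_in_bigo_iff simp_thms)
  ultimately show ?thesis
    by (simp only: landau_o.big.in_cong)
qed

lemma moment_bigo: "moment m \<in> O[at_right 0](\<lambda>t. t ^ (m div 2))"
proof (rule bigoI[where c = "4 * pi * 2 ^ m"])
  show "\<forall>\<^sub>F t in at_right 0. norm (moment m t) \<le> 4 * pi * 2 ^ m * norm (t ^ (m div 2))"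
    using eventually_oval_level
  proof eventually_elim
    case (elim t)
    then have t_range: "0 < t" "t < tmax"
      by simp_all
    note r = sqrt_small[OF t_range]
    have "\<bar>moment m t\<bar> \<le> 4 * pi * (2 * sqrt t) ^ m"
      unfolding moment_def using abs_angular_moment_le[of "sqrt t" m] r t_range by simp
    also have "\<dots> = 4 * pi * 2 ^ m * sqrt t ^ m"
      by (simp add: power_mult_distrib)
    also have "\<dots> \<le> 4 * pi * 2 ^ m * sqrt t ^ (2 * (m div 2))"
      using r t_range by (intro mult_left_mono power_decreasing) auto
    also have "sqrt t ^ (2 * (m div 2)) = t ^ (m div 2)"
      using t_range by (simp add: power_mult)
    finally show ?case
      using t_range by simp
  qed
qed

lemma moment_0_asymp: "(\<lambda>t. moment 0 t - 2 * pi) \<in> O[at_right 0](\<lambda>t. t)"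
proof -
  obtain C where C: "\<And>r. 0 \<le> r \<Longrightarrow> r < \<delta> / 2 \<Longrightarrow> \<bar>angular_moment 0 r - 2 * pi\<bar> \<le> C * r\<^sup>2"
    using angular_moment_0_expansion by blast
  show ?thesis
  proof (rule bigoI[where c = C])
    show "\<forall>\<^sub>F t in at_right 0. norm (moment 0 t - 2 * pi) \<le> C * norm t"
      using eventually_oval_level
    proof eventually_elim
      case (elim t)
      then have "0 \<le> sqrt t" "sqrt t < \<delta> / 2" "(sqrt t)\<^sup>2 = t"
        using sqrt_small[of t] by simp_all
      then show ?case
        using C[of "sqrt t"] elim by (simp add: moment_def)
    qed
  qed
qed

lemma eventually_odd_moment_eq_0:
  assumes "\<forall>j\<in>{1..genus}. a (2 * j - 1) = 0"
  shows "\<forall>\<^sub>F t in at_right 0. moment (2 * k + 1) t = 0"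
  using eventually_oval_level
proof eventually_elim
  case (elim t)
  then show ?case
    unfolding moment_def using angular_moment_odd_eq_0[OF assms, of "sqrt t"] sqrt_small[of t] by simp
qed

lemma odd_coeff_terms_bigo:
  assumes "\<And>q. q \<in> {1..genus} \<Longrightarrow> a (2 * q - 1) \<noteq> 0 \<Longrightarrow> moment (j + 2 * q) \<in> O[F](g)"
  shows "odd_coeff_terms j \<in> O[F](g)"
  unfolding odd_coeff_terms_def[abs_def]
  by (intro big_sum_in_bigo) (use assms in \<open>auto simp: mult.assoc\<close>)

lemma even_coeff_terms_bigo:
  assumes "\<And>l. l \<in> {1..d div 2} \<Longrightarrow> moment (j + 2 * l + 1) \<in> O[F](g)"
  shows "even_coeff_terms j \<in> O[F](g)"
  unfolding even_coeff_terms_def[abs_def]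
  by (intro big_sum_in_bigo) (use assms in \<open>auto simp: mult.assoc\<close>)

lemma moment_Suc_bigo:
  assumes "(\<lambda>t. real j * (t * moment (j - 1) t)) \<in> O[at_right 0](g)"
    and "odd_coeff_terms j \<in> O[at_right 0](g)" "even_coeff_terms j \<in> O[at_right 0](g)"
  shows "moment (j + 1) \<in> O[at_right 0](g)"
proof -
  have "(\<lambda>t. real j * (t * moment (j - 1) t) - odd_coeff_terms j t - even_coeff_terms j t) \<in> O[at_right 0](g)"
    using assms by (intro sum_in_bigo)
  then show ?thesis
    using moment_Suc_asymp[of j "\<lambda>_. 0" g] by (simp add: moment_rhs_def mult.assoc)
qed

lemma odd_moment_bigo:
  assumes "\<forall>q\<in>{1..genus}. q < L \<longrightarrow> a (2 * q - 1) = 0"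
  shows "moment (2 * k + 1) \<in> O[at_right 0](\<lambda>t. t ^ (k + L))"
  using assms
proof (induction L arbitrary: k)
  case 0
  show ?case
    using moment_bigo[of "2 * k + 1"] by simp
next
  case (Suc L)
  have IH: "moment (2 * k' + 1) \<in> O[at_right 0](\<lambda>t. t ^ (k' + L))" for k'
    using Suc by simp
  \<comment> \<open>a coefficient \<open>a (2q-1)\<close> with \<open>q \<le> L\<close> vanishes, otherwise the crude bound suffices\<close>
  have odd: "odd_coeff_terms (2 * k) \<in> O[at_right 0](\<lambda>t. t ^ (k + Suc L))" for k
  proof (rule odd_coeff_terms_bigo)
    fix q assume "q \<in> {1..genus}" "a (2 * q - 1) \<noteq> 0"
    then have "Suc L \<le> q"
      using Suc.prems by (meson not_less)
    then show "moment (2 * k + 2 * q) \<in> O[at_right 0](\<lambda>t. t ^ (k + Suc L))"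
      by (intro bigo_power_weaken[OF moment_bigo]) simp
  qed
  have even: "even_coeff_terms (2 * k) \<in> O[at_right 0](\<lambda>t. t ^ (k + Suc L))" for k
  proof (rule even_coeff_terms_bigo)
    fix l assume "l \<in> {1..d div 2}"
    then have "moment (2 * (k + l) + 1) \<in> O[at_right 0](\<lambda>t. t ^ (k + Suc L))"
      by (intro bigo_power_weaken[OF IH]) simp
    then show "moment (2 * k + 2 * l + 1) \<in> O[at_right 0](\<lambda>t. t ^ (k + Suc L))"
      by (simp add: algebra_simps)
  qed
  show ?case
  proof (induction k)
    case 0
    show ?case
      using moment_Suc_bigo[OF _ odd[of 0] even[of 0]] by simp
  next
    case (Suc k)
    have "(\<lambda>t. real (2 * Suc k) * (t * moment (2 * Suc k - 1) t)) \<in> O[at_right 0](\<lambda>t. t ^ (Suc k + Suc L))"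
      using bigo_mult_power[OF Suc.IH] by simp
    then show ?case
      using moment_Suc_bigo[OF _ odd[of "Suc k"] even[of "Suc k"]] by simp
  qed
qed

lemma even_moment_asymp: "(\<lambda>t. moment (2 * k) t - t ^ k * cc k) \<in> O[at_right 0](\<lambda>t. t ^ (k + 1))"
proof (induction k)
  case 0
  show ?case
    using moment_0_asymp by (simp add: cc_0)
next
  case (Suc k)
  have odd: "odd_coeff_terms (2 * k + 1) \<in> O[at_right 0](\<lambda>t. t ^ (k + 2))"
  proof (rule odd_coeff_terms_bigo)
    fix q assume "q \<in> {1..genus}"
    then have "moment (2 * (k + q) + 1) \<in> O[at_right 0](\<lambda>t. t ^ (k + 2))"
      by (intro bigo_power_weaken[OF odd_moment_bigo[of 1]]) auto
    then show "moment (2 * k + 1 + 2 * q) \<in> O[at_right 0](\<lambda>t. t ^ (k + 2))"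
      by (simp add: algebra_simps)
  qed
  have even: "even_coeff_terms (2 * k + 1) \<in> O[at_right 0](\<lambda>t. t ^ (k + 2))"
  proof (rule even_coeff_terms_bigo)
    fix l assume "l \<in> {1..d div 2}"
    then show "moment (2 * k + 1 + 2 * l + 1) \<in> O[at_right 0](\<lambda>t. t ^ (k + 2))"
      by (intro bigo_power_weaken[OF moment_bigo]) simp
  qed
  have "(\<lambda>t. real (2 * k + 1) * (t * (moment (2 * k) t - t ^ k * cc k))) \<in> O[at_right 0](\<lambda>t. t ^ (k + 2))"
    using bigo_mult_power[OF Suc.IH] by simp
  then have "(\<lambda>t. real (2 * k + 1) * (t * (moment (2 * k) t - t ^ k * cc k))
      - odd_coeff_terms (2 * k + 1) t - even_coeff_terms (2 * k + 1) t) \<in> O[at_right 0](\<lambda>t. t ^ (k + 2))"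
    using odd even by (intro sum_in_bigo)
  \<comment> \<open>the leading terms cancel because \<open>(2k+2) c\<^sub>k\<^sub>+\<^sub>1 = (2k+1) c\<^sub>k\<close>\<close>
  moreover have "real (2 * k + 1) * (t * (moment (2 * k) t - t ^ k * cc k))
      - odd_coeff_terms (2 * k + 1) t - even_coeff_terms (2 * k + 1) t
      = moment_rhs (2 * k + 1) t - real (2 * k + 1 + 1) * (t ^ Suc k * cc (Suc k))" for t
  proof -
    have "real (2 * k + 1 + 1) * (t ^ Suc k * cc (Suc k)) = (real (2 * k + 2) * cc (Suc k)) * (t * t ^ k)"
      by (simp add: algebra_simps)
    also have "\<dots> = real (2 * k + 1) * (t * (t ^ k * cc k))"
      by (simp only: cc_Suc) (simp add: algebra_simps)
    finally show ?thesis
      unfolding moment_rhs_def by (simp add: algebra_simps)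
  qed
  ultimately show ?case
    using moment_Suc_asymp[of "2 * k + 1" "\<lambda>t. t ^ Suc k * cc (Suc k)"] by simp
qed

(* Minus the main term of the expansion of I_(2k+1). *)
definition odd_leading :: "nat \<Rightarrow> real \<Rightarrow> real" where
  "odd_leading k t = 1 / 2 * (\<Sum>q=1..genus. a (2 * q - 1) * real (2 * k + 2 * q + 1) * t ^ (k + q) * cc (k + q))"

definition odd_coeff_leading :: "nat \<Rightarrow> real \<Rightarrow> real" where
  "odd_coeff_leading k t = (\<Sum>q=1..genus. (real (2 * k) + real q + 1 / 2) * a (2 * q - 1) * (cc (k + q) * t ^ (k + q)))"

lemma odd_leading_recurrence:
  "real (2 * k + 1) * odd_leading k t - real (2 * k) * t * odd_leading (k - 1) t = odd_coeff_leading k t"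
proof -
  have summand: "real (2 * k + 1) * (a (2 * q - 1) * real (2 * k + 2 * q + 1) * t ^ (k + q) * cc (k + q))
      - real (2 * k) * t * (a (2 * q - 1) * real (2 * (k - 1) + 2 * q + 1) * t ^ (k - 1 + q) * cc (k - 1 + q))
      = 2 * ((real (2 * k) + real q + 1 / 2) * a (2 * q - 1) * (cc (k + q) * t ^ (k + q)))" for q
  proof (cases k)
    case 0
    then show ?thesis
      by (simp add: algebra_simps)
  next
    case (Suc k')
    have "2 * (k - 1) + 2 * q + 1 = 2 * (k' + q) + 1" "k - 1 + q = k' + q" "2 * k + 2 * q = 2 * (k' + q) + 2"
      "k + q = Suc (k' + q)"
      using Suc by simp_all
    then have c: "real (2 * (k - 1) + 2 * q + 1) * cc (k - 1 + q) = real (2 * k + 2 * q) * cc (k + q)"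
      by (simp only: cc_Suc)
    have p: "t * t ^ (k - 1 + q) = t ^ (k + q)"
      using Suc by simp
    have "real (2 * k) * t * (a (2 * q - 1) * real (2 * (k - 1) + 2 * q + 1) * t ^ (k - 1 + q) * cc (k - 1 + q))
        = real (2 * k) * a (2 * q - 1) * (real (2 * (k - 1) + 2 * q + 1) * cc (k - 1 + q)) * (t * t ^ (k - 1 + q))"
      by (simp only: mult_ac)
    also have "\<dots> = real (2 * k) * a (2 * q - 1) * (real (2 * k + 2 * q) * cc (k + q)) * t ^ (k + q)"
      by (simp only: c p)
    finally show ?thesis
      by (simp add: algebra_simps)
  qed
  have "real (2 * k + 1) * (\<Sum>q=1..genus. a (2 * q - 1) * real (2 * k + 2 * q + 1) * t ^ (k + q) * cc (k + q))
      - real (2 * k) * t * (\<Sum>q=1..genus. a (2 * q - 1) * real (2 * (k - 1) + 2 * q + 1) * t ^ (k - 1 + q) * cc (k - 1 + q))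
      = (\<Sum>q=1..genus. 2 * ((real (2 * k) + real q + 1 / 2) * a (2 * q - 1) * (cc (k + q) * t ^ (k + q))))"
    unfolding sum_distrib_left sum_subtractf[symmetric] by (rule sum.cong[OF refl summand])
  then show ?thesis
    unfolding odd_leading_def odd_coeff_leading_def sum_distrib_left[symmetric] by (simp add: algebra_simps)
qed

lemma odd_coeff_terms_asymp:
  assumes vanish: "\<forall>q\<in>{1..genus}. q < L \<longrightarrow> a (2 * q - 1) = 0"
  shows "(\<lambda>t. odd_coeff_terms (2 * k) t - odd_coeff_leading k t) \<in> O[at_right 0](\<lambda>t. t ^ (k + L + 1))"
proof -
  have eq: "odd_coeff_terms (2 * k) t - odd_coeff_leading k t = (\<Sum>q=1..genus. (real (2 * k) + real q + 1 / 2)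
      * a (2 * q - 1) * (moment (2 * (k + q)) t - t ^ (k + q) * cc (k + q)))" for t
    unfolding odd_coeff_terms_def odd_coeff_leading_def sum_subtractf[symmetric]
    by (intro sum.cong) (simp_all add: algebra_simps)
  have terms: "(\<lambda>t. (real (2 * k) + real q + 1 / 2) * a (2 * q - 1) * (moment (2 * (k + q)) t - t ^ (k + q) * cc (k + q)))
      \<in> O[at_right 0](\<lambda>t. t ^ (k + L + 1))" if q: "q \<in> {1..genus}" for q
  proof (cases "a (2 * q - 1) = 0")
    case False
    then have "L \<le> q"
      using vanish q by (meson not_less)
    then have "(\<lambda>t. moment (2 * (k + q)) t - t ^ (k + q) * cc (k + q)) \<in> O[at_right 0](\<lambda>t. t ^ (k + L + 1))"
      by (intro bigo_power_weaken[OF even_moment_asymp]) simp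
    then show ?thesis
      by (simp add: mult.assoc)
  qed simp
  show ?thesis
    unfolding eq by (rule big_sum_in_bigo) (rule terms)
qed

lemma even_coeff_terms_odd_bigo:
  assumes "\<forall>q\<in>{1..genus}. q < L \<longrightarrow> a (2 * q - 1) = 0"
  shows "even_coeff_terms (2 * k) \<in> O[at_right 0](\<lambda>t. t ^ (k + L + 1))"
proof (rule even_coeff_terms_bigo)
  fix l assume "l \<in> {1..d div 2}"
  then have "moment (2 * (k + l) + 1) \<in> O[at_right 0](\<lambda>t. t ^ (k + L + 1))"
    by (intro bigo_power_weaken[OF odd_moment_bigo[OF assms]]) simp
  then show "moment (2 * k + 2 * l + 1) \<in> O[at_right 0](\<lambda>t. t ^ (k + L + 1))"
    by (simp add: algebra_simps)
qed

lemma odd_moment_asymp: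
  assumes vanish: "\<forall>q\<in>{1..genus}. q < L \<longrightarrow> a (2 * q - 1) = 0"
  shows "(\<lambda>t. moment (2 * k + 1) t + odd_leading k t) \<in> O[at_right 0](\<lambda>t. t ^ (k + L + 1))"
proof -
  have step: "(\<lambda>t. moment (2 * k + 1) t + odd_leading k t) \<in> O[at_right 0](\<lambda>t. t ^ (k + L + 1))"
    if "(\<lambda>t. real (2 * k) * (t * (moment (2 * k - 1) t + odd_leading (k - 1) t)))
      \<in> O[at_right 0](\<lambda>t. t ^ (k + L + 1))" for k
  proof -
    have "(\<lambda>t. real (2 * k) * (t * (moment (2 * k - 1) t + odd_leading (k - 1) t))
        - (odd_coeff_terms (2 * k) t - odd_coeff_leading k t) - even_coeff_terms (2 * k) t)
        \<in> O[at_right 0](\<lambda>t. t ^ (k + L + 1))"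
      by (rule sum_in_bigo(2)[OF sum_in_bigo(2)[OF that odd_coeff_terms_asymp[OF vanish]]
            even_coeff_terms_odd_bigo[OF vanish]])
    moreover have "real (2 * k) * (t * (moment (2 * k - 1) t + odd_leading (k - 1) t))
        - (odd_coeff_terms (2 * k) t - odd_coeff_leading k t) - even_coeff_terms (2 * k) t
        = moment_rhs (2 * k) t - real (2 * k + 1) * (- odd_leading k t)" for t
    proof -
      have "real (2 * k) * (t * (moment (2 * k - 1) t + odd_leading (k - 1) t))
          = real (2 * k) * t * moment (2 * k - 1) t + real (2 * k) * t * odd_leading (k - 1) t"
        by (simp add: algebra_simps)
      then show ?thesis
        using odd_leading_recurrence[of k t] unfolding moment_rhs_def by linarith
    qed
    ultimately show ?thesis
      using moment_Suc_asymp[of "2 * k" "\<lambda>t. - odd_leading k t"] by simp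
  qed
  show ?thesis
  proof (induction k)
    case 0
    show ?case
      by (rule step) simp
  next
    case (Suc k)
    show ?case
      by (rule step) (use bigo_mult_power[OF Suc.IH] in simp)
  qed
qed

lemma first_nonzero_odd_coeff:
  assumes "\<not> (\<forall>j\<in>{1..genus}. a (2 * j - 1) = 0)"
  obtains m where "m \<in> {1..genus}" "a (2 * m - 1) \<noteq> 0" "\<forall>q\<in>{1..genus}. q < m \<longrightarrow> a (2 * q - 1) = 0"
proof -
  define m where "m = (LEAST q. q \<in> {1..genus} \<and> a (2 * q - 1) \<noteq> 0)"
  obtain q0 where q0: "q0 \<in> {1..genus}" "a (2 * q0 - 1) \<noteq> 0"
    using assms by blast
  have "m \<in> {1..genus} \<and> a (2 * m - 1) \<noteq> 0"
    unfolding m_def by (rule LeastI[of _ q0]) (use q0 in simp)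
  moreover have "\<forall>q\<in>{1..genus}. q < m \<longrightarrow> a (2 * q - 1) = 0"
    using not_less_Least[of _ "\<lambda>q. q \<in> {1..genus} \<and> a (2 * q - 1) \<noteq> 0"] unfolding m_def by blast
  ultimately show thesis
    using that by blast
qed

theorem even_oval_integral_asymp:
  "(\<lambda>t. oval_integral Ham (2 * k) t - t ^ k * cc k) \<in> O[at_right 0](\<lambda>t. t ^ (k + 1))"
proof -
  have ev: "\<forall>\<^sub>F t in at_right 0. moment (2 * k) t - t ^ k * cc k = oval_integral Ham (2 * k) t - t ^ k * cc k"
    using eventually_oval_integral_eq_moment[of "2 * k"] by (rule eventually_mono) simp
  show ?thesis
    using even_moment_asymp[of k] unfolding landau_o.big.in_cong[OF ev] .
qed

lemma odd_oval_integral_asymp: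
  assumes "\<forall>q\<in>{1..genus}. q < L \<longrightarrow> a (2 * q - 1) = 0"
  shows "(\<lambda>t. oval_integral Ham (2 * k + 1) t + odd_leading k t) \<in> O[at_right 0](\<lambda>t. t ^ (k + L + 1))"
proof -
  have ev: "\<forall>\<^sub>F t in at_right 0.
      moment (2 * k + 1) t + odd_leading k t = oval_integral Ham (2 * k + 1) t + odd_leading k t"
    using eventually_oval_integral_eq_moment[of "2 * k + 1"] by (rule eventually_mono) simp
  show ?thesis
    using odd_moment_asymp[OF assms, of k] unfolding landau_o.big.in_cong[OF ev] .
qed

theorem odd_oval_integral_expansion:
  "\<exists>\<phi> :: nat \<Rightarrow> real \<Rightarrow> real. (\<forall>j\<in>{1..genus}. \<phi> j \<in> O[at_right 0](\<lambda>t. t)) \<and>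
     (\<forall>\<^sub>F t in at_right 0. oval_integral Ham (2 * k + 1) t =
        - (1 / 2) * (\<Sum>j=1..genus. a (2 * j - 1) * real (2 * k + 2 * j + 1) * t ^ (k + j) * (cc (k + j) + \<phi> j t)))"
proof (cases "\<forall>j\<in>{1..genus}. a (2 * j - 1) = 0")
  case True
  then have zero: "(\<Sum>j=1..genus. a (2 * j - 1) * real (2 * k + 2 * j + 1) * t ^ (k + j) * (cc (k + j) + 0)) = 0"
    for t
    by (intro sum.neutral) simp
  show ?thesis
  proof (intro exI[of _ "\<lambda>_ _. 0"] conjI ballI)
    show "(\<lambda>_. 0) \<in> O[at_right 0](\<lambda>t. t)"
      by simp
    show "\<forall>\<^sub>F t in at_right 0. oval_integral Ham (2 * k + 1) t =
        - (1 / 2) * (\<Sum>j=1..genus. a (2 * j - 1) * real (2 * k + 2 * j + 1) * t ^ (k + j) * (cc (k + j) + 0))"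
      using eventually_oval_integral_eq_moment[of "2 * k + 1"] eventually_odd_moment_eq_0[OF True, of k]
      unfolding zero by eventually_elim simp
  qed
next
  case False
  then obtain m where m: "m \<in> {1..genus}" "a (2 * m - 1) \<noteq> 0"
    and below: "\<forall>q\<in>{1..genus}. q < m \<longrightarrow> a (2 * q - 1) = 0"
    by (rule first_nonzero_odd_coeff)
  \<comment> \<open>all the error is put into the term of the first non-vanishing odd coefficient\<close>
  define E where "E t = oval_integral Ham (2 * k + 1) t + odd_leading k t" for t
  have E: "E \<in> O[at_right 0](\<lambda>t. t ^ (1 + (k + m)))"
    using odd_oval_integral_asymp[OF below, of k] unfolding E_def[abs_def] by (simp add: ac_simps)
  define c where "c = a (2 * m - 1) * real (2 * k + 2 * m + 1)"
  have c: "c \<noteq> 0"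
    using m by (simp add: c_def)
  define \<phi> where "\<phi> j t = (if j = m then - 2 * E t / (c * t ^ (k + m)) else 0)" for j t
  show ?thesis
  proof (intro exI[of _ \<phi>] conjI ballI)
    fix j
    have "(\<lambda>t. E t / t ^ (k + m)) \<in> O[at_right 0](\<lambda>t. t)"
      using bigo_divide_power[OF E] by simp
    then have "(\<lambda>t. (- 2 / c) * (E t / t ^ (k + m))) \<in> O[at_right 0](\<lambda>t. t)"
      by (simp only: cmult_in_bigo_iff simp_thms)
    moreover have "\<phi> m = (\<lambda>t. (- 2 / c) * (E t / t ^ (k + m)))"
      by (simp add: \<phi>_def fun_eq_iff times_divide_times_eq)
    moreover have "j \<noteq> m \<Longrightarrow> \<phi> j = (\<lambda>t. 0)"
      by (simp add: \<phi>_def fun_eq_iff)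
    ultimately show "\<phi> j \<in> O[at_right 0](\<lambda>t. t)"
      by (cases "j = m") simp_all
  next
    show "\<forall>\<^sub>F t in at_right 0. oval_integral Ham (2 * k + 1) t =
        - (1 / 2) * (\<Sum>j=1..genus. a (2 * j - 1) * real (2 * k + 2 * j + 1) * t ^ (k + j) * (cc (k + j) + \<phi> j t))"
      using eventually_oval_level
    proof eventually_elim
      case (elim t)
      define f where "f j = a (2 * j - 1) * real (2 * k + 2 * j + 1) * t ^ (k + j)" for j
      have "(\<Sum>j=1..genus. f j * \<phi> j t) = (\<Sum>j=1..genus. if j = m then f m * \<phi> m t else 0)"
        by (rule sum.cong) (simp_all add: \<phi>_def)
      also have "\<dots> = - 2 * E t"
        using m c elim unfolding f_def \<phi>_def c_def by simp
      finally have "(\<Sum>j=1..genus. f j * (cc (k + j) + \<phi> j t)) = 2 * odd_leading k t - 2 * E t"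
        unfolding odd_leading_def f_def by (simp add: distrib_left sum.distrib)
      then show ?case
        unfolding f_def E_def by simp
    qed
  qed
qed

end

theorem lemma1:
  fixes n :: nat and a :: "nat \<Rightarrow> real" and H :: "real \<times> real \<Rightarrow> real" and g :: nat
  assumes "n \<ge> 5"
    and "a (n - 2) \<noteq> 0"
    and "H = (\<lambda>(x, y). y ^ 2 + x ^ 2 + (\<Sum>k = 1..n - 2. a k * x ^ (k + 2)))"
    and "g = (n - 1) div 2"
  shows "(\<forall>k. (\<lambda>t. oval_integral H (2 * k) t - t ^ k * cc k) \<in> O[at_right 0](\<lambda>t. t ^ (k + 1)))
       \<and> (\<forall>k. \<exists>\<phi> :: nat \<Rightarrow> real \<Rightarrow> real.
             (\<forall>j \<in> {1..g}. \<phi> j \<in> O[at_right 0](\<lambda>t. t)) \<and>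
             (\<forall>\<^sub>F t in at_right 0.
                oval_integral H (2 * k + 1) t =
                  - (1 / 2) * (\<Sum>j = 1..g. a (2 * j - 1) * real (2 * k + 2 * j + 1)
                                 * t ^ (k + j) * (cc (k + j) + \<phi> j t))))"
proof -
  interpret oscillator a "n - 2"
    using assms(1) by unfold_locales simp
  have "H = Ham"
    unfolding assms(3) Ham_def pot_def by (simp add: add.assoc)
  moreover have "g = genus"
    unfolding assms(4) genus_def using assms(1) by (simp add: Suc_diff_Suc numeral_eq_Suc)
  ultimately show ?thesis
    using even_oval_integral_asymp odd_oval_integral_expansion by blast
qed

end
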